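(* Let $r,s$ be positive integers, $Q\subseteq[r]\times[s]$, and let $I\subseteq\mathbb{K}[x]=\mathbb{K}[x_1,\dots,x_r]$ and $J\subseteq\mathbb{K}[y]=\mathbb{K}[y_1,\dots,y_s]$ be ideals homogeneous with respect to total degree. Let $F\subseteq I$ be a Gröbner basis of $I$ with respect to a weight $\omega_1\in\mathbb{R}^r$ and $G\subseteq J$ a Gröbner basis of $J$ with respect to a weight $\omega_2\in\mathbb{R}^s$, such that every element of $F$ is weakly $Q$-homogeneous with respect to $\omega_1$ and every element of $G$ is weakly $Q$-homogeneous with respect to $\omega_2$ (in the sense below). Then \[ \operatorname{Lift}(F)\cup\operatorname{Lift}(G)\cup H_Q \] is a pseudo-Gröbner basis of $I\times_Q J$ with respect to the weight $\omega^TB_Q$, where $\omega=(\omega_1,\omega_2)$ and $B_Q\in\mathbb{Z}^{(r+s)\times\#Q}$ is the matrix of exponent vectors of $\phi_Q$.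
   Context: $\phi_Q:\mathbb{K}[z_{jk}:(j,k)\in Q]\to\mathbb{K}[x,y]$ is the homomorphism $z_{jk}\mapsto x_jy_k$, and $I_Q=\ker\phi_Q$. The quasi-independence gluing is $I\times_QJ:=\phi_Q^{-1}(I+J)$. $G_Q$ is the bipartite graph on vertex sets $[r]$ and $[s]$ (disjoint copies) with edge set $Q$. $H_Q$ is the set of binomials $\prod_{i=1}^\ell z_{j_ik_i}-\prod_{i=1}^\ell z_{j_{i+1}k_i}$ (indices mod $\ell$), one for each induced cycle $j_1-k_1-j_2-k_2-\cdots-j_\ell-k_\ell-j_1$ of $G_Q$. For a weight $\omega$, $\mathrm{in}_\omega(f)$ is the sum of terms of $f$ of maximal $\omega$-weight, and a finite set $P\subseteq K$ is a pseudo-Gröbner basis of an ideal $K$ with respect to $\omega$ if $\langle \mathrm{in}_\omega(P)\rangle=\mathrm{in}_\omega(K)$ (initial forms need not be monomials). Weak $Q$-homogeneity: a polynomial $f\in\mathbb{K}[x]$ homogeneous in total degree $d$ whose $\omega$-initial form is (a scalar multiple of) the monomial $x_{j_1}\cdots x_{j_d}$ is weakly $Q$-homogeneous with respect to $\omega$ if for every monomial $x_{j'_1}\cdots x_{j'_d}$ of $f$ there is a permutation $\sigma$ of $[d]$ with $\{(k_1,\dots,k_d)\in[s]^d:(j_\ell,k_\ell)\in Q\ \forall\ell\}\subseteq\{(k_1,\dots,k_d)\in[s]^d:(j'_{\sigma(\ell)},k_\ell)\in Q\ \forall\ell\}$. For polynomials in $\mathbb{K}[y]$ the definition is the same with the roles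 of the two coordinates of $Q$ swapped. Lifts: write a weakly $Q$-homogeneous $f=\sum_\ell c_\ell x_{j_{\ell,1}}\cdots x_{j_{\ell,d}}$ with leading monomial $x_{j_{*,1}}\cdots x_{j_{*,d}}$, each monomial's factors being ordered (by such a permutation) so that $(j_{*,i},k_i)\in Q$ for all $i$ implies $(j_{\ell,i},k_i)\in Q$ for all $i,\ell$. For $k=(k_1,\dots,k_d)\in[s]^d$ with $(j_{*,i},k_i)\in Q$ for all $i$, the lift is $f_k=\sum_\ell c_\ell z_{j_{\ell,1}k_1}\cdots z_{j_{\ell,d}k_d}$, and $\operatorname{Lift}(f)$ is the set of all such $f_k$; $\operatorname{Lift}(F)=\bigcup_{f\in F}\operatorname{Lift}(f)$. Lifts of elements of $\mathbb{K}[y]$ are defined symmetrically (lifting by first indices $j$). *)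

theory Defs
  imports Complex_Main "HOL-Library.Poly_Mapping"
begin

type_synonym ('v, 'k) mpoly = "('v \<Rightarrow>\<^sub>0 nat) \<Rightarrow>\<^sub>0 'k"

definition polys_in :: "'v set \<Rightarrow> ('v, 'k::zero) mpoly set" where
  "polys_in V = {p. \<forall>m\<in>Poly_Mapping.keys p. Poly_Mapping.keys m \<subseteq> V}"

definition is_ideal_in :: "('v, 'k::comm_ring_1) mpoly set \<Rightarrow> ('v, 'k) mpoly set \<Rightarrow> bool" where
  "is_ideal_in R I \<longleftrightarrow> I \<subseteq> R \<and> 0 \<in> I \<and> (\<forall>f\<in>I. \<forall>g\<in>I. f + g \<in> I)
     \<and> (\<forall>h\<in>R. \<forall>f\<in>I. h * f \<in> I)"

definition ideal_gen :: "('v, 'k::comm_ring_1) mpoly set \<Rightarrow> ('v, 'k) mpoly set \<Rightarrow> ('v, 'k) mpoly set" where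
  "ideal_gen R S = \<Inter>{K. is_ideal_in R K \<and> S \<subseteq> K}"

definition mdeg :: "('v \<Rightarrow>\<^sub>0 nat) \<Rightarrow> nat" where
  "mdeg m = (\<Sum>v\<in>Poly_Mapping.keys m. Poly_Mapping.lookup m v)"

definition hcomp :: "nat \<Rightarrow> ('v, 'k::comm_monoid_add) mpoly \<Rightarrow> ('v, 'k) mpoly" where
  "hcomp d f = (\<Sum>m\<in>{m\<in>Poly_Mapping.keys f. mdeg m = d}. Poly_Mapping.single m (Poly_Mapping.lookup f m))"

definition homog_ideal :: "('v, 'k::comm_monoid_add) mpoly set \<Rightarrow> bool" where
  "homog_ideal I \<longleftrightarrow> (\<forall>f\<in>I. \<forall>d. hcomp d f \<in> I)"

definition wdeg :: "('v \<Rightarrow> real) \<Rightarrow> ('v \<Rightarrow>\<^sub>0 nat) \<Rightarrow> real" where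
  "wdeg w m = (\<Sum>v\<in>Poly_Mapping.keys m. real (Poly_Mapping.lookup m v) * w v)"

definition init :: "('v \<Rightarrow> real) \<Rightarrow> ('v, 'k::comm_monoid_add) mpoly \<Rightarrow> ('v, 'k) mpoly" where
  "init w f = (\<Sum>m\<in>{m\<in>Poly_Mapping.keys f. wdeg w m = Max (wdeg w ` Poly_Mapping.keys f)}. Poly_Mapping.single m (Poly_Mapping.lookup f m))"

definition pseudo_GB :: "('v, 'k::comm_ring_1) mpoly set \<Rightarrow> ('v \<Rightarrow> real) \<Rightarrow> ('v, 'k) mpoly set
     \<Rightarrow> ('v, 'k) mpoly set \<Rightarrow> bool" where
  "pseudo_GB R w P K \<longleftrightarrow> finite P \<and> P \<subseteq> K \<and> ideal_gen R (init w ` P) = ideal_gen R (init w ` K)"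

text \<open>Groebner basis w.r.t. a weight (the same condition; for the F, G
  considered here all initial forms are monomials).\<close>
definition groebner_basis :: "('v, 'k::comm_ring_1) mpoly set \<Rightarrow> ('v \<Rightarrow> real) \<Rightarrow> ('v, 'k) mpoly set
     \<Rightarrow> ('v, 'k) mpoly set \<Rightarrow> bool" where
  "groebner_basis R w P K \<longleftrightarrow> finite P \<and> P \<subseteq> K \<and> ideal_gen R (init w ` P) = ideal_gen R (init w ` K)"

definition mon_of_list :: "'v list \<Rightarrow> ('v \<Rightarrow>\<^sub>0 nat)" where
  "mon_of_list js = (\<Sum>i<length js. Poly_Mapping.single (js ! i) 1)"

definition lead_mon :: "(nat \<Rightarrow> real) \<Rightarrow> (nat, 'k::comm_monoid_add) mpoly \<Rightarrow> (nat \<Rightarrow>\<^sub>0 nat)" where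
  "lead_mon w f = (THE L. \<exists>c. c \<noteq> 0 \<and> init w f = Poly_Mapping.single L c)"

text \<open>An ordering o of the factors of every monomial of f witnessing weak Q-homogeneity:
  with the leading monomial ordered as ord L, every compatible index tuple ks for ord L is
  compatible with ord m.  Q' = Q for polynomials in x, Q' = converse Q for polynomials in y.\<close>
definition valid_order :: "(nat \<times> nat) set \<Rightarrow> (nat \<Rightarrow> real) \<Rightarrow> (nat, 'k::comm_monoid_add) mpoly
     \<Rightarrow> ((nat \<Rightarrow>\<^sub>0 nat) \<Rightarrow> nat list) \<Rightarrow> bool" where
  "valid_order Q' w f ord \<longleftrightarrow> (let L = lead_mon w f in
     \<forall>m\<in>Poly_Mapping.keys f. mon_of_list (ord m) = m \<and>
       (\<forall>ks. length ks = length (ord L) \<longrightarrow> (\<forall>i<length ks. (ord L ! i, ks ! i) \<in> Q')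
              \<longrightarrow> (\<forall>i<length ks. (ord m ! i, ks ! i) \<in> Q')))"

definition weakly_Q_hom :: "(nat \<times> nat) set \<Rightarrow> (nat \<Rightarrow> real) \<Rightarrow> (nat, 'k::comm_monoid_add) mpoly \<Rightarrow> bool" where
  "weakly_Q_hom Q' w f \<longleftrightarrow> (\<exists>d. \<forall>m\<in>Poly_Mapping.keys f. mdeg m = d)
     \<and> (\<exists>L c. c \<noteq> 0 \<and> init w f = Poly_Mapping.single L c)
     \<and> (\<exists>ord. valid_order Q' w f ord)"

text \<open>Lift f_ks of f with respect to the ordering o; pair builds the z-variable index
  (Pair for x-polynomials, swapped pair for y-polynomials).\<close>
definition lift :: "(nat \<Rightarrow> nat \<Rightarrow> nat \<times> nat) \<Rightarrow> ((nat \<Rightarrow>\<^sub>0 nat) \<Rightarrow> nat list) \<Rightarrow> nat list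
     \<Rightarrow> (nat, 'k::comm_monoid_add) mpoly \<Rightarrow> (nat \<times> nat, 'k) mpoly" where
  "lift pair ord ks f = (\<Sum>m\<in>Poly_Mapping.keys f.
     Poly_Mapping.single (\<Sum>i<length ks. Poly_Mapping.single (pair (ord m ! i) (ks ! i)) 1) (Poly_Mapping.lookup f m))"

definition Lifts :: "(nat \<Rightarrow> nat \<Rightarrow> nat \<times> nat) \<Rightarrow> (nat \<times> nat) set \<Rightarrow> (nat \<Rightarrow> real)
     \<Rightarrow> ((nat \<Rightarrow>\<^sub>0 nat) \<Rightarrow> nat list) \<Rightarrow> (nat, 'k::comm_monoid_add) mpoly \<Rightarrow> (nat \<times> nat, 'k) mpoly set" where
  "Lifts pair Q' w ord f = {lift pair ord ks f | ks. length ks = length (ord (lead_mon w f))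
      \<and> (\<forall>i<length ks. (ord (lead_mon w f) ! i, ks ! i) \<in> Q')}"

text \<open>Induced cycles j_1-k_1-...-j_l-k_l-j_1 of the bipartite graph G_Q.\<close>
definition induced_cycle :: "(nat \<times> nat) set \<Rightarrow> nat list \<Rightarrow> nat list \<Rightarrow> bool" where
  "induced_cycle Q js ks \<longleftrightarrow> (let l = length js in
     length ks = l \<and> l \<ge> 2 \<and> distinct js \<and> distinct ks
     \<and> (\<forall>i<l. (js ! i, ks ! i) \<in> Q \<and> (js ! ((i + 1) mod l), ks ! i) \<in> Q)
     \<and> (\<forall>a<l. \<forall>b<l. (js ! a, ks ! b) \<in> Q \<longrightarrow> a = b \<or> a = (b + 1) mod l))"

definition cycle_binomial :: "nat list \<Rightarrow> nat list \<Rightarrow> (nat \<times> nat, 'k::comm_ring_1) mpoly" where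
  "cycle_binomial js ks = (let l = length js in
     Poly_Mapping.single (\<Sum>i<l. Poly_Mapping.single (js ! i, ks ! i) 1) 1
     - Poly_Mapping.single (\<Sum>i<l. Poly_Mapping.single (js ! ((i + 1) mod l), ks ! i) 1) 1)"

definition H_Q :: "(nat \<times> nat) set \<Rightarrow> (nat \<times> nat, 'k::comm_ring_1) mpoly set" where
  "H_Q Q = {cycle_binomial js ks | js ks. induced_cycle Q js ks}"

text \<open>phi_Q : z_jk \<mapsto> x_j y_k, with x_j = Inl j and y_k = Inr k.\<close>
definition mon_phi :: "(nat \<times> nat \<Rightarrow>\<^sub>0 nat) \<Rightarrow> (nat + nat \<Rightarrow>\<^sub>0 nat)" where
  "mon_phi m = (\<Sum>p\<in>Poly_Mapping.keys m. Poly_Mapping.single (Inl (fst p)) (Poly_Mapping.lookup m p)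
                             + Poly_Mapping.single (Inr (snd p)) (Poly_Mapping.lookup m p))"

definition phi :: "(nat \<times> nat, 'k::comm_monoid_add) mpoly \<Rightarrow> (nat + nat, 'k) mpoly" where
  "phi f = (\<Sum>m\<in>Poly_Mapping.keys f. Poly_Mapping.single (mon_phi m) (Poly_Mapping.lookup f m))"

definition ren_mon :: "('a \<Rightarrow> 'b) \<Rightarrow> ('a \<Rightarrow>\<^sub>0 nat) \<Rightarrow> ('b \<Rightarrow>\<^sub>0 nat)" where
  "ren_mon g m = (\<Sum>v\<in>Poly_Mapping.keys m. Poly_Mapping.single (g v) (Poly_Mapping.lookup m v))"

definition ren_poly :: "('a \<Rightarrow> 'b) \<Rightarrow> ('a, 'k::comm_monoid_add) mpoly \<Rightarrow> ('b, 'k) mpoly" where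
  "ren_poly g p = (\<Sum>m\<in>Poly_Mapping.keys p. Poly_Mapping.single (ren_mon g m) (Poly_Mapping.lookup p m))"

text \<open>Quasi-independence gluing I \<times>_Q J = phi_Q^{-1}(I + J) inside K[z_jk : (j,k) \<in> Q].\<close>
definition glue :: "nat \<Rightarrow> nat \<Rightarrow> (nat \<times> nat) set \<Rightarrow> (nat, 'k::comm_ring_1) mpoly set
     \<Rightarrow> (nat, 'k) mpoly set \<Rightarrow> (nat \<times> nat, 'k) mpoly set" where
  "glue r s Q I J = {f \<in> polys_in Q. phi f \<in>
     ideal_gen (polys_in (Inl ` {1..r} \<union> Inr ` {1..s})) (ren_poly Inl ` I \<union> ren_poly Inr ` J)}"

end

theory Submission
  imports Defs "HOL-Library.Multiset"
begin

text \<open>Every lift of f lies in K = I \<times>_Q J, since phi_Q maps it to f times a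
  monomial in y, and the binomials of H_Q lie in the kernel of phi_Q. Conversely, split the
  initial form of h \<in> K into the terms whose x-part and y-part are both standard (divisible by
  no leading monomial of F, resp. G) and the remaining terms. Each remaining term is divisible
  by the leading monomial of a lift, obtained by pairing the factors of the leading monomial
  of f with variables z_jk of the term. The standard part is mapped to 0 by phi_Q, because
  standard monomials x^a y^b are linearly independent modulo I + J (a functional built from
  normal forms modulo F and G vanishes on I + J and detects a standard monomial of maximal
  weight). Finally, the kernel of phi_Q is the toric ideal of G_Q, which is generated by the
  binomials of induced cycles, and these are their own initial forms.\<close>

abbreviation lookup where "lookup \<equiv> Poly_Mapping.lookup"
abbreviation keys where "keys \<equiv> Poly_Mapping.keys"
abbreviation single where "single \<equiv> Poly_Mapping.single"

lemma additive_sum: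
  assumes "\<And>a b. f (a + b) = f a + f b" "f 0 = 0"
  shows "f (\<Sum>i\<in>A. g i) = (\<Sum>i\<in>A. f (g i))"
  by (induction A rule: infinite_finite_induct) (simp_all add: assms)

lemma sum_single_lookup: "(\<Sum>m\<in>keys p. single m (lookup p m)) = p"
proof (rule poly_mapping_eqI)
  fix k
  show "lookup (\<Sum>m\<in>keys p. single m (lookup p m)) k = lookup p k"
    by (cases "k \<in> keys p") (auto simp: lookup_sum lookup_single when_def in_keys_iff)
qed

lemma lookup_sum_single_when:
  assumes "finite A"
  shows "lookup (\<Sum>x\<in>A. single (f x) (c x)) y = (\<Sum>x\<in>{x\<in>A. f x = y}. c x)"
  using assms by (simp add: lookup_sum lookup_single when_def sum.inter_filter)

lemma single_mult_eq_sum: "single a c * p = (\<Sum>m\<in>keys p. single (a + m) (c * lookup p m))"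
  by (subst (1) sum_single_lookup[of p, symmetric]) (simp add: sum_distrib_left mult_single)

lemma lookup_single_mult:
  fixes p :: "('v, 'k::comm_semiring_1) mpoly"
  shows "lookup (single a c * p) (a + m) = c * lookup p m"
proof -
  have "lookup (single a c * p) (a + m) = (\<Sum>m'\<in>{m'\<in>keys p. a + m' = a + m}. c * lookup p m')"
    unfolding single_mult_eq_sum by (rule lookup_sum_single_when) simp
  also have "{m'\<in>keys p. a + m' = a + m} = (if m \<in> keys p then {m} else {})"
    by auto
  finally show ?thesis by (simp add: in_keys_iff split: if_splits)
qed

lemma keys_single_mult: "keys (single a c * p) \<subseteq> (\<lambda>m. a + m) ` keys p"
  using keys_mult[of "single a c" p] by (auto split: if_splits)

lemma additive_eqI:
  fixes f g :: "('a \<Rightarrow>\<^sub>0 'b::comm_monoid_add) \<Rightarrow> 'c::comm_monoid_add"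
  assumes "\<And>a b. f (a + b) = f a + f b" "f 0 = 0"
    and "\<And>a b. g (a + b) = g a + g b" "g 0 = 0"
    and "\<And>v n. f (single v n) = g (single v n)"
  shows "f m = g m"
proof -
  have "h m = (\<Sum>v\<in>keys m. h (single v (lookup m v)))"
    if "\<And>a b. h (a + b) = h a + h b" "h 0 = 0" for h :: "('a \<Rightarrow>\<^sub>0 'b) \<Rightarrow> 'c"
    using additive_sum[of h, OF that, of "\<lambda>v. single v (lookup m v)" "keys m"]
    by (simp add: sum_single_lookup)
  from this[of f] this[of g] show ?thesis using assms by simp
qed

lemma mdeg_add: "mdeg (a + b) = mdeg a + mdeg b"
  unfolding mdeg_def by (rule setsum_keys_plus_distrib) simp_all

lemma mdeg_zero [simp]: "mdeg 0 = 0"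
  by (simp add: mdeg_def)

lemma mdeg_single [simp]: "mdeg (single v n) = n"
  by (simp add: mdeg_def)

lemma mdeg_eq_0_iff: "mdeg m = 0 \<longleftrightarrow> m = 0"
proof
  assume "mdeg m = 0"
  then have "\<forall>v\<in>keys m. lookup m v = 0" unfolding mdeg_def by simp
  then show "m = 0" by (metis all_not_in_conv in_keys_iff keys_eq_empty)
qed simp

lemma lookup_le_mdeg: "lookup m v \<le> mdeg m"
  by (cases "v \<in> keys m") (auto simp: mdeg_def in_keys_iff intro: member_le_sum)

lemma wdeg_add: "wdeg w (a + b) = wdeg w a + wdeg w b"
  unfolding wdeg_def by (rule setsum_keys_plus_distrib) (simp_all add: algebra_simps)

lemma wdeg_zero [simp]: "wdeg w 0 = 0"
  by (simp add: wdeg_def)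

lemma wdeg_single [simp]: "wdeg w (single v n) = real n * w v"
  by (simp add: wdeg_def)

lemma mon_of_list_Cons: "mon_of_list (x # xs) = single x 1 + mon_of_list xs"
  unfolding mon_of_list_def length_Cons sum.lessThan_Suc_shift by simp

lemma additive_mon_of_list:
  assumes "\<And>a b. f (a + b) = f a + f b" "f 0 = 0"
  shows "f (mon_of_list js) = (\<Sum>i<length js. f (single (js ! i) 1))"
  unfolding mon_of_list_def by (rule additive_sum[OF assms])

lemma mdeg_mon_of_list [simp]: "mdeg (mon_of_list js) = length js"
  by (simp add: additive_mon_of_list mdeg_add)

lemma keys_sum_single_subset: "keys (\<Sum>i\<in>A. single (f i) (c i)) \<subseteq> f ` A"
  using keys_sum[of "\<lambda>i. single (f i) (c i)" A] by (auto split: if_splits)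

lemma ren_mon_add: "ren_mon g (a + b) = ren_mon g a + ren_mon g b"
  unfolding ren_mon_def by (rule setsum_keys_plus_distrib) (simp_all add: single_add)

lemma ren_mon_zero [simp]: "ren_mon g 0 = 0"
  by (simp add: ren_mon_def)

lemma ren_mon_single [simp]: "ren_mon g (single v n) = single (g v) n"
  by (simp add: ren_mon_def)

lemma keys_ren_mon: "keys (ren_mon g a) \<subseteq> g ` keys a"
  unfolding ren_mon_def using keys_sum_single_subset[of "\<lambda>v. g v"] by blast

lemma lookup_ren_mon: "lookup (ren_mon g n) u = (\<Sum>p\<in>{p\<in>keys n. g p = u}. lookup n p)"
  unfolding ren_mon_def by (rule lookup_sum_single_when) simp

lemma mon_phi_add: "mon_phi (a + b) = mon_phi a + mon_phi b"
  unfolding mon_phi_def by (rule setsum_keys_plus_distrib) (simp_all add: single_add ac_simps)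

lemma mon_phi_zero [simp]: "mon_phi 0 = 0"
  by (simp add: mon_phi_def)

lemma mon_phi_single: "mon_phi (single p n) = single (Inl (fst p)) n + single (Inr (snd p)) n"
  by (simp add: mon_phi_def)

lemma mon_phi_sum:
  "mon_phi (\<Sum>i\<in>S. single (f i) 1)
     = (\<Sum>i\<in>S. single (Inl (fst (f i))) 1) + (\<Sum>i\<in>S. single (Inr (snd (f i))) 1)"
  by (simp add: additive_sum[of mon_phi, OF mon_phi_add mon_phi_zero] mon_phi_single sum.distrib)

lemma mdeg_mon_phi: "mdeg (mon_phi a) = 2 * mdeg a"
  by (rule additive_eqI[where f = "\<lambda>a. mdeg (mon_phi a)"])
     (simp_all add: mon_phi_add mdeg_add mon_phi_single)

lemma phi_add: "phi (p + q) = phi p + phi q"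
  unfolding phi_def by (rule setsum_keys_plus_distrib) (simp_all add: single_add)

lemma phi_zero [simp]: "phi 0 = 0"
  by (simp add: phi_def)

lemma phi_single [simp]: "phi (single m c) = single (mon_phi m) c"
  by (simp add: phi_def)

lemma phi_diff: "phi (p - q :: (nat \<times> nat, 'k::ab_group_add) mpoly) = phi p - phi q"
  using phi_add[of "p - q" q] by (simp add: algebra_simps)

lemma phi_sum: "phi (\<Sum>i\<in>A. g i) = (\<Sum>i\<in>A. phi (g i))"
  by (rule additive_sum) (simp_all add: phi_add)

lemma lookup_phi: "lookup (phi f) \<mu> = (\<Sum>m\<in>{m\<in>keys f. mon_phi m = \<mu>}. lookup f m)"
  unfolding phi_def by (rule lookup_sum_single_when) simp

lemma keys_phi: "keys (phi f) \<subseteq> mon_phi ` keys f"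
  unfolding phi_def by (rule keys_sum_single_subset)

lemma single_mult_ren_poly:
  "single \<mu> c * ren_poly g f = (\<Sum>a\<in>keys f. single (\<mu> + ren_mon g a) (c * lookup f a))"
  by (simp add: ren_poly_def sum_distrib_left mult_single)

definition x_part :: "(nat + nat \<Rightarrow>\<^sub>0 nat) \<Rightarrow> (nat \<Rightarrow>\<^sub>0 nat)" where
  "x_part \<mu> = Poly_Mapping.map_key Inl \<mu>"

definition y_part :: "(nat + nat \<Rightarrow>\<^sub>0 nat) \<Rightarrow> (nat \<Rightarrow>\<^sub>0 nat)" where
  "y_part \<mu> = Poly_Mapping.map_key Inr \<mu>"

lemma lookup_x_part: "lookup (x_part \<mu>) j = lookup \<mu> (Inl j)"
  by (simp add: x_part_def map_key.rep_eq)

lemma lookup_y_part: "lookup (y_part \<mu>) k = lookup \<mu> (Inr k)"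
  by (simp add: y_part_def map_key.rep_eq)

lemma x_part_add: "x_part (a + b) = x_part a + x_part b"
  by (simp add: x_part_def map_key_plus)

lemma y_part_add: "y_part (a + b) = y_part a + y_part b"
  by (simp add: y_part_def map_key_plus)

lemma x_part_zero [simp]: "x_part 0 = 0"
  by (simp add: x_part_def)

lemma y_part_zero [simp]: "y_part 0 = 0"
  by (simp add: y_part_def)

lemma x_part_single: "x_part (single v n) = (case v of Inl j \<Rightarrow> single j n | Inr k \<Rightarrow> 0)"
  by (rule poly_mapping_eqI) (simp add: lookup_x_part lookup_single when_def split: sum.splits)

lemma y_part_single: "y_part (single v n) = (case v of Inl j \<Rightarrow> 0 | Inr k \<Rightarrow> single k n)"
  by (rule poly_mapping_eqI) (simp add: lookup_y_part lookup_single when_def split: sum.splits)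

lemma x_y_part_eqI: "x_part a = x_part b \<Longrightarrow> y_part a = y_part b \<Longrightarrow> a = b"
  by (rule poly_mapping_eqI, metis lookup_x_part lookup_y_part sum.exhaust)

lemma keys_x_part: "keys \<mu> \<subseteq> Inl ` V1 \<union> Inr ` V2 \<Longrightarrow> keys (x_part \<mu>) \<subseteq> V1"
  by (auto simp: y_part_def x_part_def keys_map_key)

lemma keys_y_part: "keys \<mu> \<subseteq> Inl ` V1 \<union> Inr ` V2 \<Longrightarrow> keys (y_part \<mu>) \<subseteq> V2"
  by (auto simp: y_part_def keys_map_key)

lemma x_part_ren_mon_Inl [simp]: "x_part (ren_mon Inl a) = a"
  by (rule additive_eqI[where f = "\<lambda>a. x_part (ren_mon Inl a)"])
     (simp_all add: ren_mon_add x_part_add x_part_single)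

lemma x_part_ren_mon_Inr [simp]: "x_part (ren_mon Inr a) = 0"
  by (rule additive_eqI[where f = "\<lambda>a. x_part (ren_mon Inr a)"])
     (simp_all add: ren_mon_add x_part_add x_part_single)

lemma y_part_ren_mon_Inl [simp]: "y_part (ren_mon Inl a) = 0"
  by (rule additive_eqI[where f = "\<lambda>a. y_part (ren_mon Inl a)"])
     (simp_all add: ren_mon_add y_part_add y_part_single)

lemma y_part_ren_mon_Inr [simp]: "y_part (ren_mon Inr a) = a"
  by (rule additive_eqI[where f = "\<lambda>a. y_part (ren_mon Inr a)"])
     (simp_all add: ren_mon_add y_part_add y_part_single)

lemma x_part_mon_phi: "x_part (mon_phi n) = ren_mon fst n"
  by (rule additive_eqI[where f = "\<lambda>n. x_part (mon_phi n)"])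
     (simp_all add: mon_phi_add x_part_add ren_mon_add mon_phi_single x_part_single)

lemma y_part_mon_phi: "y_part (mon_phi n) = ren_mon snd n"
  by (rule additive_eqI[where f = "\<lambda>n. y_part (mon_phi n)"])
     (simp_all add: mon_phi_add y_part_add ren_mon_add mon_phi_single y_part_single)

definition weight_xy :: "(nat \<Rightarrow> real) \<Rightarrow> (nat \<Rightarrow> real) \<Rightarrow> nat + nat \<Rightarrow> real" where
  "weight_xy w1 w2 = case_sum w1 w2"

lemma wdeg_weight_xy: "wdeg (weight_xy w1 w2) \<mu> = wdeg w1 (x_part \<mu>) + wdeg w2 (y_part \<mu>)"
  by (rule additive_eqI[where f = "wdeg (weight_xy w1 w2)"])
     (simp_all add: wdeg_add x_part_add y_part_add x_part_single y_part_single weight_xy_def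
        split: sum.splits)

lemma wdeg_mon_phi: "wdeg (weight_xy w1 w2) (mon_phi n) = wdeg (\<lambda>p. w1 (fst p) + w2 (snd p)) n"
  by (rule additive_eqI[where f = "\<lambda>n. wdeg (weight_xy w1 w2) (mon_phi n)"])
     (simp_all add: mon_phi_add wdeg_add mon_phi_single weight_xy_def algebra_simps)

lemma polys_inI: "(\<And>m. m \<in> keys p \<Longrightarrow> keys m \<subseteq> V) \<Longrightarrow> p \<in> polys_in V"
  by (auto simp: polys_in_def)

lemma polys_inD: "p \<in> polys_in V \<Longrightarrow> m \<in> keys p \<Longrightarrow> keys m \<subseteq> V"
  by (auto simp: polys_in_def)

lemma keys_add_mon: "keys ((a::'v \<Rightarrow>\<^sub>0 nat) + b) = keys a \<union> keys b"
  by (auto simp: in_keys_iff lookup_add)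

lemma polys_in_zero [simp]: "0 \<in> polys_in V"
  by (rule polys_inI) simp

lemma polys_in_single: "keys m \<subseteq> V \<Longrightarrow> single m c \<in> polys_in V"
  by (rule polys_inI) (simp split: if_splits)

lemma polys_in_add: "p \<in> polys_in V \<Longrightarrow> q \<in> polys_in V \<Longrightarrow> p + q \<in> polys_in V"
  by (rule polys_inI) (use keys_add[of p q] polys_inD in blast)

lemma polys_in_diff:
  "p \<in> polys_in V \<Longrightarrow> q \<in> polys_in V \<Longrightarrow> (p - q :: ('v, 'k::ab_group_add) mpoly) \<in> polys_in V"
  by (rule polys_inI) (use keys_diff[of p q] polys_inD in blast)

lemma polys_in_mult:
  assumes "p \<in> polys_in V" "q \<in> polys_in V"
  shows "(p * q :: ('v, 'k::comm_semiring_0) mpoly) \<in> polys_in V"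
proof (rule polys_inI)
  fix m assume "m \<in> keys (p * q)"
  then obtain a b where "m = a + b" "a \<in> keys p" "b \<in> keys q" using keys_mult by blast
  then show "keys m \<subseteq> V" using polys_inD[OF assms(1)] polys_inD[OF assms(2)] by (simp add: keys_add_mon)
qed

lemma polys_in_sum: "(\<And>i. i \<in> A \<Longrightarrow> g i \<in> polys_in V) \<Longrightarrow> (\<Sum>i\<in>A. g i) \<in> polys_in V"
  by (induction A rule: infinite_finite_induct) (simp_all add: polys_in_add)

lemma polys_in_ren_poly:
  assumes "f \<in> polys_in V" "g ` V \<subseteq> W"
  shows "ren_poly g f \<in> polys_in W"
proof (rule polys_inI)
  fix m assume "m \<in> keys (ren_poly g f)"
  then obtain a where "a \<in> keys f" "m = ren_mon g a"
    unfolding ren_poly_def using keys_sum_single_subset[of "ren_mon g"] by blast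
  then show "keys m \<subseteq> W" using keys_ren_mon[of g a] polys_inD[OF assms(1)] assms(2) by blast
qed

lemma ideal_in_subset: "is_ideal_in R I \<Longrightarrow> I \<subseteq> R"
  by (simp add: is_ideal_in_def)

lemma ideal_in_zero: "is_ideal_in R I \<Longrightarrow> 0 \<in> I"
  by (simp add: is_ideal_in_def)

lemma ideal_in_add: "is_ideal_in R I \<Longrightarrow> f \<in> I \<Longrightarrow> g \<in> I \<Longrightarrow> f + g \<in> I"
  by (simp add: is_ideal_in_def)

lemma ideal_in_mult: "is_ideal_in R I \<Longrightarrow> h \<in> R \<Longrightarrow> f \<in> I \<Longrightarrow> h * f \<in> I"
  by (simp add: is_ideal_in_def)

lemma ideal_in_uminus:
  assumes "is_ideal_in (polys_in V) I" "f \<in> I"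
  shows "(- f :: ('v, 'k::comm_ring_1) mpoly) \<in> I"
  using ideal_in_mult[OF assms(1) polys_in_single[of 0 V "- 1"] assms(2)] by (simp add: single_uminus)

lemma ideal_in_diff:
  assumes "is_ideal_in (polys_in V) I" "f \<in> I" "g \<in> I"
  shows "(f - g :: ('v, 'k::comm_ring_1) mpoly) \<in> I"
  using ideal_in_add[OF assms(1,2) ideal_in_uminus[OF assms(1,3)]] by simp

lemma ideal_in_sum:
  assumes "is_ideal_in R I" "\<And>i. i \<in> A \<Longrightarrow> g i \<in> I"
  shows "(\<Sum>i\<in>A. g i) \<in> I"
  using assms(2)
  by (induction A rule: infinite_finite_induct)
     (auto intro: ideal_in_add[OF assms(1)] ideal_in_zero[OF assms(1)])

lemma ideal_in_polys_in: "is_ideal_in (polys_in V) (polys_in V :: ('v, 'k::comm_ring_1) mpoly set)"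
  unfolding is_ideal_in_def by (simp add: polys_in_add polys_in_mult)

lemma ideal_gen_subset: "S \<subseteq> ideal_gen R S"
  by (auto simp: ideal_gen_def)

lemma ideal_gen_least: "is_ideal_in R K \<Longrightarrow> S \<subseteq> K \<Longrightarrow> ideal_gen R S \<subseteq> K"
  by (auto simp: ideal_gen_def)

lemma ideal_in_ideal_gen:
  assumes "S \<subseteq> polys_in V"
  shows "is_ideal_in (polys_in V) (ideal_gen (polys_in V) (S :: ('v, 'k::comm_ring_1) mpoly set))"
  unfolding is_ideal_in_def
proof (intro conjI ballI)
  show "ideal_gen (polys_in V) S \<subseteq> polys_in V"
    by (rule ideal_gen_least[OF ideal_in_polys_in assms])
  show "0 \<in> ideal_gen (polys_in V) S"
    by (auto simp: ideal_gen_def dest: ideal_in_zero)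
  show "f + g \<in> ideal_gen (polys_in V) S"
    if "f \<in> ideal_gen (polys_in V) S" "g \<in> ideal_gen (polys_in V) S" for f g
    using that by (auto simp: ideal_gen_def dest: ideal_in_add)
  show "h * f \<in> ideal_gen (polys_in V) S"
    if "h \<in> polys_in V" "f \<in> ideal_gen (polys_in V) S" for h f
    using that by (auto simp: ideal_gen_def dest: ideal_in_mult)
qed

lemma ideal_gen_mono:
  assumes "S \<subseteq> T" "T \<subseteq> polys_in V"
  shows "ideal_gen (polys_in V) S \<subseteq> ideal_gen (polys_in V) (T :: ('v, 'k::comm_ring_1) mpoly set)"
  using ideal_gen_least[OF ideal_in_ideal_gen[OF assms(2)]] assms(1) ideal_gen_subset by blast

definition max_wdeg :: "('v \<Rightarrow> real) \<Rightarrow> ('v, 'k::zero) mpoly \<Rightarrow> real" where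
  "max_wdeg w f = Max (wdeg w ` keys f)"

lemma lookup_init: "lookup (init w f) m = (if wdeg w m = max_wdeg w f then lookup f m else 0)"
  by (simp add: init_def max_wdeg_def lookup_sum lookup_single when_def in_keys_iff
      sum.delta[OF finite_keys, unfolded in_keys_iff] flip: sum.inter_filter)

lemma keys_init: "keys (init w f) = {m \<in> keys f. wdeg w m = max_wdeg w f}"
  by (rule set_eqI) (simp add: in_keys_iff lookup_init)

lemma keys_init_subset: "keys (init w f) \<subseteq> keys f"
  unfolding keys_init by blast

lemma wdeg_le_max_wdeg: "m \<in> keys f \<Longrightarrow> wdeg w m \<le> max_wdeg w f"
  unfolding max_wdeg_def by (rule Max_ge) auto

lemma max_wdeg_attained: "f \<noteq> 0 \<Longrightarrow> \<exists>m\<in>keys f. wdeg w m = max_wdeg w f"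
  unfolding max_wdeg_def using Max_in[of "wdeg w ` keys f"] by fastforce

lemma init_eq_0_iff [simp]: "init w f = 0 \<longleftrightarrow> f = 0"
proof
  assume "init w f = 0"
  then show "f = 0" using max_wdeg_attained[of f w] keys_init[of w f] by auto
qed (simp add: init_def)

lemma init_polys_in: "f \<in> polys_in V \<Longrightarrow> init w f \<in> polys_in V"
  using keys_init_subset polys_inD by (blast intro: polys_inI)

lemma init_eq_self:
  assumes "\<And>m. m \<in> keys f \<Longrightarrow> wdeg w m = c"
  shows "init w f = f"
proof (cases "f = 0")
  case False
  then have "max_wdeg w f = c" using assms max_wdeg_attained by metis
  then show ?thesis
    using assms by (intro poly_mapping_eqI) (simp add: lookup_init in_keys_iff, metis)
qed (simp add: init_def)

lemma init_eq_single:
  assumes mu: "lookup p \<mu> \<noteq> 0"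
    and lt: "\<And>\<nu>. \<nu> \<in> keys p \<Longrightarrow> \<nu> \<noteq> \<mu> \<Longrightarrow> wdeg w \<nu> < wdeg w \<mu>"
  shows "init w p = single \<mu> (lookup p \<mu>)"
proof -
  have "\<mu> \<in> keys p" using mu by (simp add: in_keys_iff)
  then have max: "max_wdeg w p = wdeg w \<mu>"
    using lt max_wdeg_attained[of p w] wdeg_le_max_wdeg[of \<mu> p w] by force
  have "keys (init w p) = {\<mu>}"
    unfolding keys_init max using \<open>\<mu> \<in> keys p\<close> lt by fastforce
  show ?thesis
  proof (rule poly_mapping_eqI)
    fix k
    show "lookup (init w p) k = lookup (single \<mu> (lookup p \<mu>)) k"
    proof (cases "k = \<mu>")
      case False
      then have "k \<notin> keys (init w p)" using \<open>keys (init w p) = {\<mu>}\<close> by simp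
      then show ?thesis using False by (simp add: lookup_single_not_eq in_keys_iff)
    qed (simp add: lookup_init max)
  qed
qed

lemma lead_mon_eq:
  assumes "init w f = single L c" "c \<noteq> 0"
  shows "lead_mon w f = L" and "lookup f L = c"
    and "\<And>t. t \<in> keys f \<Longrightarrow> t \<noteq> L \<Longrightarrow> wdeg w t < wdeg w L"
proof -
  show "lead_mon w f = L" unfolding lead_mon_def
    by (rule the_equality) (use assms in \<open>auto, metis lookup_single_eq lookup_single_not_eq\<close>)
  have kI: "keys (init w f) = {L}" using assms by simp
  then have L: "wdeg w L = max_wdeg w f" using keys_init[of w f] by blast
  then show "lookup f L = c" using lookup_init[of w f L] assms by simp
  fix t assume "t \<in> keys f" "t \<noteq> L"
  then show "wdeg w t < wdeg w L"
    using kI keys_init[of w f] wdeg_le_max_wdeg[of t f w] L by (auto simp: order_le_less)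
qed

section \<open>Normal forms modulo a homogeneous Groebner basis\<close>

definition mon_divides :: "('v \<Rightarrow>\<^sub>0 nat) \<Rightarrow> ('v \<Rightarrow>\<^sub>0 nat) \<Rightarrow> bool" where
  "mon_divides L m \<longleftrightarrow> (\<exists>e. m = L + e)"

definition monomial_ideal :: "'v set \<Rightarrow> ('v \<Rightarrow>\<^sub>0 nat) set \<Rightarrow> ('v, 'k::comm_ring_1) mpoly set" where
  "monomial_ideal V D = {p \<in> polys_in V. \<forall>m\<in>keys p. \<exists>L\<in>D. mon_divides L m}"

lemma is_ideal_in_monomial_ideal:
  "is_ideal_in (polys_in V) (monomial_ideal V D :: ('v, 'k::comm_ring_1) mpoly set)"
  unfolding is_ideal_in_def
proof (intro conjI ballI)
  show "monomial_ideal V D \<subseteq> (polys_in V :: ('v, 'k) mpoly set)"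
    unfolding monomial_ideal_def by blast
  show "0 \<in> (monomial_ideal V D :: ('v, 'k) mpoly set)"
    unfolding monomial_ideal_def by simp
  show "f + g \<in> monomial_ideal V D" if "f \<in> monomial_ideal V D" "g \<in> monomial_ideal V D"
    for f g :: "('v, 'k) mpoly"
    using that keys_add[of f g] unfolding monomial_ideal_def by (auto simp: polys_in_add)
  show "h * f \<in> monomial_ideal V D" if h: "h \<in> polys_in V" and f: "f \<in> monomial_ideal V D"
    for h f :: "('v, 'k) mpoly"
    unfolding monomial_ideal_def
  proof (intro CollectI conjI ballI)
    show "h * f \<in> polys_in V" using f h by (simp add: monomial_ideal_def polys_in_mult)
    fix m assume "m \<in> keys (h * f)"
    then obtain a b where "m = a + b" "b \<in> keys f" using keys_mult[of h f] by blast
    moreover obtain L e where "L \<in> D" "b = L + e"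
      using f \<open>b \<in> keys f\<close> unfolding monomial_ideal_def mon_divides_def by blast
    ultimately show "\<exists>L\<in>D. mon_divides L m"
      unfolding mon_divides_def by (metis add.left_commute)
  qed
qed

lemma finite_monomials_of_degree:
  assumes "finite V"
  shows "finite {m :: 'v \<Rightarrow>\<^sub>0 nat. keys m \<subseteq> V \<and> mdeg m = n}"
proof -
  let ?S = "{m :: 'v \<Rightarrow>\<^sub>0 nat. keys m \<subseteq> V \<and> mdeg m = n}"
  have "?S \<subseteq> (\<lambda>f. Abs_poly_mapping f) ` {f. (\<forall>v. v \<notin> V \<longrightarrow> f v = 0) \<and> (\<forall>v. f v \<le> n)}"
  proof
    fix m assume "m \<in> ?S"
    then show "m \<in> (\<lambda>f. Abs_poly_mapping f) ` {f. (\<forall>v. v \<notin> V \<longrightarrow> f v = 0) \<and> (\<forall>v. f v \<le> n)}"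
      using lookup_le_mdeg[of m] lookup_inverse[of m]
      by (intro image_eqI[where x = "lookup m"]) (auto simp: in_keys_iff)
  qed
  moreover have "finite {f. (\<forall>v. v \<notin> V \<longrightarrow> f v = 0) \<and> (\<forall>v. f v \<le> n)}"
    using finite_set_of_finite_funs[OF assms, of "{..n}" 0] by (rule finite_subset[rotated]) auto
  ultimately show ?thesis using finite_surj by blast
qed

lemma mset_set_mult_replace:
  assumes "finite N" "finite N'" "m \<in> N - N'" "\<And>k. k \<in> N' - N \<Longrightarrow> (k, m) \<in> r"
  shows "(mset_set N', mset_set N) \<in> mult r"
proof -
  have split: "mset_set A = mset_set (A \<inter> B) + mset_set (A - B)" if "finite A" for A B :: "'a set"
    using mset_set_Union[of "A \<inter> B" "A - B"] that by (simp add: Int_Diff_Un Int_Diff_disjoint)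
  have "(mset_set (N' \<inter> N) + mset_set (N' - N), mset_set (N' \<inter> N) + mset_set (N - N')) \<in> mult r"
  proof (rule one_step_implies_mult)
    have "m \<in># mset_set (N - N')" using assms(1,3) by simp
    then show "mset_set (N - N') \<noteq> {#}" by auto
  qed (use assms in auto)
  then show ?thesis using split[OF assms(1), of N'] split[OF assms(2), of N] by (simp add: Int_commute)
qed

locale homogeneous_gb =
  fixes V :: "nat set" and I F :: "(nat, 'k::field) mpoly set" and w :: "nat \<Rightarrow> real"
  assumes finite_V: "finite V"
    and ideal: "is_ideal_in (polys_in V) I"
    and gb: "groebner_basis (polys_in V) w F I"
    and homogeneous: "\<forall>f\<in>F. \<exists>d. \<forall>m\<in>keys f. mdeg m = d"
    and init_monomial: "\<forall>f\<in>F. \<exists>L c. c \<noteq> 0 \<and> init w f = single L c"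
begin

lemma F_subset: "F \<subseteq> I"
  using gb by (simp add: groebner_basis_def)

lemma finite_F: "finite F"
  using gb by (simp add: groebner_basis_def)

lemma I_subset: "I \<subseteq> polys_in V"
  using ideal by (rule ideal_in_subset)

lemma init_basis_elem:
  assumes "f \<in> F"
  shows "init w f = single (lead_mon w f) (lookup f (lead_mon w f))"
    and "lookup f (lead_mon w f) \<noteq> 0"
    and "\<And>t. t \<in> keys f \<Longrightarrow> t \<noteq> lead_mon w f \<Longrightarrow> wdeg w t < wdeg w (lead_mon w f)"
  using init_monomial assms lead_mon_eq by metis+

definition std :: "(nat \<Rightarrow>\<^sub>0 nat) set" where
  "std = {m. \<forall>f\<in>F. \<not> mon_divides (lead_mon w f) m}"

lemma ideal_elem_has_nonstd_key:
  assumes "q \<in> I" "q \<noteq> 0"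
  shows "\<exists>m\<in>keys q. m \<notin> std"
proof -
  have init_F: "init w ` F \<subseteq> monomial_ideal V (lead_mon w ` F)"
  proof
    fix x assume "x \<in> init w ` F"
    then obtain f where f: "f \<in> F" "x = init w f" by blast
    then have "x \<in> polys_in V" using F_subset I_subset init_polys_in by blast
    then show "x \<in> monomial_ideal V (lead_mon w ` F)"
      using f init_basis_elem(1)[OF f(1)]
      by (auto simp: monomial_ideal_def mon_divides_def intro!: exI[of _ 0])
  qed
  have "init w q \<in> ideal_gen (polys_in V) (init w ` I)"
    using assms(1) ideal_gen_subset by blast
  also have "\<dots> = ideal_gen (polys_in V) (init w ` F)"
    using gb by (simp add: groebner_basis_def)
  also have "\<dots> \<subseteq> monomial_ideal V (lead_mon w ` F)"
    by (rule ideal_gen_least[OF is_ideal_in_monomial_ideal init_F])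
  finally have "init w q \<in> monomial_ideal V (lead_mon w ` F)" .
  moreover obtain m where "m \<in> keys (init w q)"
    using assms(2) by (metis all_not_in_conv init_eq_0_iff keys_eq_empty)
  ultimately show ?thesis
    using keys_init_subset by (fastforce simp: monomial_ideal_def std_def)
qed

lemma ideal_elem_std_eq_0: "q \<in> I \<Longrightarrow> keys q \<subseteq> std \<Longrightarrow> q = 0"
  using ideal_elem_has_nonstd_key by blast

definition mons_of_degree :: "nat \<Rightarrow> (nat \<Rightarrow>\<^sub>0 nat) set" where
  "mons_of_degree n = {m. keys m \<subseteq> V \<and> mdeg m = n}"

lemma finite_mons_of_degree: "finite (mons_of_degree n)"
  unfolding mons_of_degree_def by (rule finite_monomials_of_degree[OF finite_V])

lemma polys_in_if_keys_of_degree: "keys s \<subseteq> mons_of_degree n \<Longrightarrow> s \<in> polys_in V"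
  by (rule polys_inI) (auto simp: mons_of_degree_def)

lemma reducer:
  fixes a :: 'k
  assumes f: "f \<in> F" and e: "keys e \<subseteq> V"
  defines "r \<equiv> single e (a / lookup f (lead_mon w f)) * f"
  shows "r \<in> I" and "lookup r (e + lead_mon w f) = a"
    and "\<And>\<nu>. \<nu> \<in> keys r \<Longrightarrow> \<nu> \<noteq> e + lead_mon w f \<Longrightarrow> wdeg w \<nu> < wdeg w (e + lead_mon w f)"
    and "\<And>\<nu>. \<nu> \<in> keys r \<Longrightarrow> \<nu> \<in> mons_of_degree (mdeg (e + lead_mon w f))"
proof -
  let ?L = "lead_mon w f"
  show "r \<in> I" unfolding r_def
    by (rule ideal_in_mult[OF ideal polys_in_single[OF e]]) (use f F_subset in blast)
  have lookup_r: "lookup r (e + t) = a / lookup f ?L * lookup f t" for t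
    unfolding r_def by (metis lookup_single_mult)
  show "lookup r (e + ?L) = a"
    using lookup_r init_basis_elem(2)[OF f] by simp
  fix \<nu> assume "\<nu> \<in> keys r"
  then obtain t where t: "t \<in> keys f" "\<nu> = e + t"
    unfolding r_def using keys_single_mult by blast
  show "wdeg w \<nu> < wdeg w (e + ?L)" if "\<nu> \<noteq> e + ?L"
    using init_basis_elem(3)[OF f t(1)] that t(2) by (auto simp: wdeg_add)
  obtain d where "\<forall>m\<in>keys f. mdeg m = d" using homogeneous f by blast
  moreover have "?L \<in> keys f" using init_basis_elem(2)[OF f] by (simp add: in_keys_iff)
  moreover have "keys t \<subseteq> V" using t(1) f F_subset I_subset polys_inD by blast
  ultimately show "\<nu> \<in> mons_of_degree (mdeg (e + ?L))"
    using t e by (simp add: mons_of_degree_def mdeg_add keys_add_mon)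
qed

definition weight_order :: "nat \<Rightarrow> ((nat \<Rightarrow>\<^sub>0 nat) \<times> (nat \<Rightarrow>\<^sub>0 nat)) set" where
  "weight_order n = {(a, b). a \<in> mons_of_degree n \<and> b \<in> mons_of_degree n \<and> wdeg w a < wdeg w b}"

lemma wf_weight_order: "wf (weight_order n)"
proof (rule wf_subset[OF wf_measure])
  show "weight_order n \<subseteq> measure (\<lambda>a. card {t \<in> mons_of_degree n. wdeg w t < wdeg w a})"
    unfolding weight_order_def
    by (auto intro!: psubset_card_mono simp: finite_mons_of_degree)
qed

text \<open>The step cancels a nonstandard monomial of maximal weight; the reducer only introduces
  monomials of smaller weight.\<close>

lemma reduction_step:
  assumes g: "keys g \<subseteq> mons_of_degree n" and nonstd: "\<not> keys g \<subseteq> std"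
  obtains r where "r \<in> I" "keys (g - r) \<subseteq> mons_of_degree n"
    "(mset_set (keys (g - r) - std), mset_set (keys g - std)) \<in> mult (weight_order n)"
    "\<forall>\<nu>\<in>keys (g - r). \<exists>\<nu>'\<in>keys g. wdeg w \<nu> \<le> wdeg w \<nu>'"
proof -
  let ?N = "keys g - std"
  define c where "c = Max (wdeg w ` ?N)"
  have "c \<in> wdeg w ` ?N" unfolding c_def using nonstd by (intro Max_in) auto
  then obtain m where m: "m \<in> keys g" "m \<notin> std" "wdeg w m = c" by blast
  obtain f e where f: "f \<in> F" "m = e + lead_mon w f"
    using m(2) unfolding std_def mon_divides_def by (auto simp: add.commute)
  have m_deg: "m \<in> mons_of_degree n" using g m(1) by blast
  then have e: "keys e \<subseteq> V" using f(2) by (simp add: mons_of_degree_def keys_add_mon)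
  define r where "r = single e (lookup g m / lookup f (lead_mon w f)) * f"
  note red = reducer[OF f(1) e, where a = "lookup g m", folded r_def f(2)]
  have g'_m: "lookup (g - r) m = 0" using red(2) by (simp add: lookup_minus)
  have g'_keys: "\<nu> \<noteq> m \<and> (\<nu> \<in> keys g \<or> wdeg w \<nu> < c)" if "\<nu> \<in> keys (g - r)" for \<nu>
  proof -
    have "\<nu> \<noteq> m" using that g'_m by (auto simp: in_keys_iff)
    moreover have "\<nu> \<in> keys g \<or> \<nu> \<in> keys r" using that keys_diff[of g r] by auto
    ultimately show ?thesis using red(3) m(3) by blast
  qed
  have g'_deg: "keys (g - r) \<subseteq> mons_of_degree n"
    using keys_diff[of g r] g red(4) m_deg by (auto simp: mons_of_degree_def)
  show ?thesis
  proof (rule that[OF red(1) g'_deg])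
    show "(mset_set (keys (g - r) - std), mset_set ?N) \<in> mult (weight_order n)"
    proof (rule mset_set_mult_replace)
      show "m \<in> ?N - (keys (g - r) - std)" using m g'_m by (simp add: in_keys_iff)
      show "(k, m) \<in> weight_order n" if "k \<in> (keys (g - r) - std) - ?N" for k
        using that g'_keys[of k] g'_deg m_deg m(3) by (auto simp: weight_order_def)
    qed simp_all
    show "\<forall>\<nu>\<in>keys (g - r). \<exists>\<nu>'\<in>keys g. wdeg w \<nu> \<le> wdeg w \<nu>'"
      using g'_keys m(1,3) by (meson less_le_not_le order_refl linorder_le_cases)
  qed
qed

text \<open>Homogeneity keeps all monomials in the finite set of monomials of a fixed degree, on
  which the weight order is well founded.\<close>

lemma normal_form_exists:
  assumes "keys g \<subseteq> mons_of_degree n"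
  shows "\<exists>s. g - s \<in> I \<and> keys s \<subseteq> mons_of_degree n \<inter> std
           \<and> (\<forall>\<mu>\<in>keys s. \<exists>\<nu>\<in>keys g. wdeg w \<mu> \<le> wdeg w \<nu>)"
  using assms
proof (induction g rule: wf_induct_rule[OF wf_inv_image[OF wf_mult[OF wf_weight_order[of n]],
      of "\<lambda>g. mset_set (keys g - std)"]])
  case (1 g)
  show ?case
  proof (cases "keys g \<subseteq> std")
    case True
    then show ?thesis using "1.prems" ideal_in_zero[OF ideal] by (intro exI[of _ g]) auto
  next
    case False
    from reduction_step[OF "1.prems" False] obtain r where r: "r \<in> I"
        "keys (g - r) \<subseteq> mons_of_degree n"
        "(mset_set (keys (g - r) - std), mset_set (keys g - std)) \<in> mult (weight_order n)"
        "\<forall>\<nu>\<in>keys (g - r). \<exists>\<nu>'\<in>keys g. wdeg w \<nu> \<le> wdeg w \<nu>'" .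
    then obtain s where s: "g - r - s \<in> I" "keys s \<subseteq> mons_of_degree n \<inter> std"
        "\<forall>\<mu>\<in>keys s. \<exists>\<nu>\<in>keys (g - r). wdeg w \<mu> \<le> wdeg w \<nu>"
      using "1.IH"[of "g - r"] by auto
    have "g - s = r + (g - r - s)" by simp
    then have "g - s \<in> I" using ideal_in_add[OF ideal r(1) s(1)] by metis
    moreover have "\<forall>\<mu>\<in>keys s. \<exists>\<nu>\<in>keys g. wdeg w \<mu> \<le> wdeg w \<nu>"
      using s(3) r(4) by (meson order_trans)
    ultimately show ?thesis using s(2) by blast
  qed
qed

definition normal_form :: "(nat \<Rightarrow>\<^sub>0 nat) \<Rightarrow> (nat, 'k) mpoly" where
  "normal_form a = (THE s. single a 1 - s \<in> I \<and> keys s \<subseteq> std \<and> s \<in> polys_in V)"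

lemma normal_form_eqI:
  assumes "single a 1 - s \<in> I" "keys s \<subseteq> std" "s \<in> polys_in V"
  shows "normal_form a = s"
  unfolding normal_form_def
proof (rule the_equality)
  fix s' assume s': "single a 1 - s' \<in> I \<and> keys s' \<subseteq> std \<and> s' \<in> polys_in V"
  have "s' - s = (single a 1 - s) - (single a 1 - s')" by simp
  then have "s' - s \<in> I" using ideal_in_diff[OF ideal assms(1)] s' by metis
  moreover have "keys (s' - s) \<subseteq> std" using keys_diff[of s' s] assms(2) s' by blast
  ultimately show "s' = s" using ideal_elem_std_eq_0 by fastforce
qed (use assms in blast)

lemma normal_form:
  assumes "keys a \<subseteq> V"
  shows "single a 1 - normal_form a \<in> I" and "keys (normal_form a) \<subseteq> std"
    and "\<And>\<mu>. \<mu> \<in> keys (normal_form a) \<Longrightarrow> wdeg w \<mu> \<le> wdeg w a"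
proof -
  have "keys (single a 1) \<subseteq> mons_of_degree (mdeg a)"
    using assms by (simp add: mons_of_degree_def)
  from normal_form_exists[OF this] obtain s where s: "single a 1 - s \<in> I"
      "keys s \<subseteq> mons_of_degree (mdeg a) \<inter> std" "\<forall>\<mu>\<in>keys s. wdeg w \<mu> \<le> wdeg w a"
    by auto
  have "normal_form a = s"
    using s polys_in_if_keys_of_degree by (intro normal_form_eqI) auto
  with s show "single a 1 - normal_form a \<in> I" "keys (normal_form a) \<subseteq> std"
    "\<And>\<mu>. \<mu> \<in> keys (normal_form a) \<Longrightarrow> wdeg w \<mu> \<le> wdeg w a"
    by auto
qed

lemma normal_form_std: "a \<in> std \<Longrightarrow> keys a \<subseteq> V \<Longrightarrow> normal_form a = single a 1"
  by (rule normal_form_eqI) (use ideal_in_zero[OF ideal] polys_in_single in auto)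

lemma wdeg_normal_form_nonstd:
  assumes a: "keys a \<subseteq> V" "a \<notin> std" and \<mu>: "\<mu> \<in> keys (normal_form a)"
  shows "wdeg w \<mu> < wdeg w a"
proof -
  obtain f e where f: "f \<in> F" "a = e + lead_mon w f"
    using a(2) unfolding std_def mon_divides_def by (auto simp: add.commute)
  have e: "keys e \<subseteq> V" using a(1) f(2) by (simp add: keys_add_mon)
  define r where "r = single e (1 / lookup f (lead_mon w f)) * f"
  note red = reducer[OF f(1) e, where a = 1, folded r_def f(2)]
  define g where "g = single a 1 - r"
  have g_keys: "\<nu> \<in> keys r \<and> \<nu> \<noteq> a" if "\<nu> \<in> keys g" for \<nu>
  proof -
    have "\<nu> \<noteq> a" using that red(2) by (auto simp: g_def lookup_minus in_keys_iff)
    then show ?thesis using that keys_diff[of "single a 1" r] by (auto simp: g_def)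
  qed
  have "keys g \<subseteq> mons_of_degree (mdeg a)" using g_keys red(4) by blast
  from normal_form_exists[OF this] obtain s where s: "g - s \<in> I"
      "keys s \<subseteq> mons_of_degree (mdeg a) \<inter> std" "\<forall>\<mu>\<in>keys s. \<exists>\<nu>\<in>keys g. wdeg w \<mu> \<le> wdeg w \<nu>"
    by blast
  have "single a 1 - s = r + (g - s)" by (simp add: g_def)
  then have "single a 1 - s \<in> I" using ideal_in_add[OF ideal red(1) s(1)] by metis
  then have "normal_form a = s"
    using s(2) polys_in_if_keys_of_degree by (intro normal_form_eqI) auto
  then show ?thesis using s(3) \<mu> g_keys red(3) by fastforce
qed

text \<open>Uniqueness of normal forms makes them linear.\<close>

lemma normal_form_shift_ideal_elem:
  assumes "f \<in> I" "keys e \<subseteq> V"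
  shows "(\<Sum>a\<in>keys f. lookup f a * lookup (normal_form (e + a)) a0) = 0"
proof -
  define s where "s = (\<Sum>a\<in>keys f. single 0 (lookup f a) * normal_form (e + a))"
  have keys_V: "keys (e + a) \<subseteq> V" if "a \<in> keys f" for a
    using that assms I_subset polys_inD by (fastforce simp: keys_add_mon)
  have "single e 1 * f - s = (\<Sum>a\<in>keys f. single 0 (lookup f a) * (single (e + a) 1 - normal_form (e + a)))"
    by (simp add: s_def single_mult_eq_sum mult_single right_diff_distrib sum_subtractf)
  also have "\<dots> \<in> I"
    by (intro ideal_in_sum[OF ideal] ideal_in_mult[OF ideal polys_in_single] normal_form(1) keys_V)
       simp_all
  finally have "single e 1 * f - s \<in> I" .
  moreover have "single e 1 * f \<in> I" by (rule ideal_in_mult[OF ideal polys_in_single[OF assms(2)] assms(1)])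
  ultimately have "s \<in> I" using ideal_in_diff[OF ideal] by fastforce
  moreover have "keys s \<subseteq> std"
    unfolding s_def using keys_sum keys_single_mult normal_form(2)[OF keys_V] by fastforce
  ultimately have "s = 0" by (rule ideal_elem_std_eq_0)
  then have "lookup s a0 = 0" by simp
  then show ?thesis by (simp add: s_def lookup_sum lookup_single_mult[of 0, simplified])
qed

end

section \<open>Standard monomials modulo I + J\<close>

locale homogeneous_gb_pair = X: homogeneous_gb V1 I F w1 + Y: homogeneous_gb V2 J G w2
  for V1 and I F :: "(nat, 'k::field) mpoly set" and w1
    and V2 and J G :: "(nat, 'k) mpoly set" and w2
begin

definition vars_xy :: "(nat + nat) set" where
  "vars_xy = Inl ` V1 \<union> Inr ` V2"

definition sum_ideal :: "(nat + nat, 'k) mpoly set" where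
  "sum_ideal = ideal_gen (polys_in vars_xy) (ren_poly Inl ` I \<union> ren_poly Inr ` J)"

text \<open>The functional nf_functional a0 b0 reads off the coefficient of the standard
  monomial x^a0 y^b0 in the normal form modulo I + J, computed factorwise.\<close>

definition nf_coeff :: "(nat \<Rightarrow>\<^sub>0 nat) \<Rightarrow> (nat \<Rightarrow>\<^sub>0 nat) \<Rightarrow> (nat + nat \<Rightarrow>\<^sub>0 nat) \<Rightarrow> 'k" where
  "nf_coeff a0 b0 \<mu> = lookup (X.normal_form (x_part \<mu>)) a0 * lookup (Y.normal_form (y_part \<mu>)) b0"

definition nf_functional :: "(nat \<Rightarrow>\<^sub>0 nat) \<Rightarrow> (nat \<Rightarrow>\<^sub>0 nat) \<Rightarrow> (nat + nat, 'k) mpoly \<Rightarrow> 'k" where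
  "nf_functional a0 b0 p = (\<Sum>\<mu>\<in>keys p. lookup p \<mu> * nf_coeff a0 b0 \<mu>)"

lemma nf_functional_add: "nf_functional a0 b0 (p + q) = nf_functional a0 b0 p + nf_functional a0 b0 q"
  unfolding nf_functional_def by (rule setsum_keys_plus_distrib) (simp_all add: distrib_right)

lemma nf_functional_sum: "nf_functional a0 b0 (\<Sum>i\<in>A. g i) = (\<Sum>i\<in>A. nf_functional a0 b0 (g i))"
  by (rule additive_sum[OF nf_functional_add]) (simp add: nf_functional_def)

lemma nf_functional_single [simp]: "nf_functional a0 b0 (single \<mu> c) = c * nf_coeff a0 b0 \<mu>"
  by (simp add: nf_functional_def)

definition shift_annihilated :: "(nat + nat, 'k) mpoly set" where
  "shift_annihilated = {p \<in> polys_in vars_xy.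
     \<forall>\<mu> c a0 b0. keys \<mu> \<subseteq> vars_xy \<longrightarrow> nf_functional a0 b0 (single \<mu> c * p) = 0}"

lemma is_ideal_in_shift_annihilated: "is_ideal_in (polys_in vars_xy) shift_annihilated"
  unfolding is_ideal_in_def
proof (intro conjI ballI)
  show "shift_annihilated \<subseteq> polys_in vars_xy" unfolding shift_annihilated_def by blast
  show "0 \<in> shift_annihilated" unfolding shift_annihilated_def by (simp add: nf_functional_def)
  show "p + q \<in> shift_annihilated" if "p \<in> shift_annihilated" "q \<in> shift_annihilated"
    for p q :: "(nat + nat, 'k) mpoly"
    using that unfolding shift_annihilated_def by (simp add: polys_in_add distrib_left nf_functional_add)
next
  fix h p :: "(nat + nat, 'k) mpoly" assume h: "h \<in> polys_in vars_xy" and p: "p \<in> shift_annihilated"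
  show "h * p \<in> shift_annihilated" unfolding shift_annihilated_def
  proof (intro CollectI conjI allI impI)
    show "h * p \<in> polys_in vars_xy" using p h unfolding shift_annihilated_def by (simp add: polys_in_mult)
    fix \<mu> :: "nat + nat \<Rightarrow>\<^sub>0 nat" and c :: 'k and a0 b0 assume \<mu>: "keys \<mu> \<subseteq> vars_xy"
    have "single \<mu> c * (h * p) = (\<Sum>\<nu>\<in>keys h. single (\<mu> + \<nu>) (c * lookup h \<nu>) * p)"
      by (simp add: mult.assoc[symmetric] single_mult_eq_sum sum_distrib_right)
    moreover have "keys (\<mu> + \<nu>) \<subseteq> vars_xy" if "\<nu> \<in> keys h" for \<nu>
      using \<mu> polys_inD[OF h that] by (simp add: keys_add_mon)
    ultimately show "nf_functional a0 b0 (single \<mu> c * (h * p)) = 0"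
      using p unfolding shift_annihilated_def by (simp add: nf_functional_sum)
  qed
qed

lemma generators_shift_annihilated: "ren_poly Inl ` I \<union> ren_poly Inr ` J \<subseteq> shift_annihilated"
proof -
  have "ren_poly Inl f \<in> shift_annihilated" if f: "f \<in> I" for f :: "(nat, 'k) mpoly"
    unfolding shift_annihilated_def
  proof (intro CollectI conjI allI impI)
    show "ren_poly Inl f \<in> polys_in vars_xy"
      using X.I_subset f by (intro polys_in_ren_poly) (auto simp: vars_xy_def)
    fix \<mu> :: "nat + nat \<Rightarrow>\<^sub>0 nat" and c :: 'k and a0 b0 assume "keys \<mu> \<subseteq> vars_xy"
    then have "keys (x_part \<mu>) \<subseteq> V1" unfolding vars_xy_def by (rule keys_x_part)
    have "nf_functional a0 b0 (single \<mu> c * ren_poly Inl f)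
        = c * lookup (Y.normal_form (y_part \<mu>)) b0
            * (\<Sum>a\<in>keys f. lookup f a * lookup (X.normal_form (x_part \<mu> + a)) a0)"
      unfolding single_mult_ren_poly nf_functional_sum nf_functional_single nf_coeff_def
        x_part_add y_part_add
      by (simp add: sum_distrib_left ac_simps)
    also have "\<dots> = 0"
      using X.normal_form_shift_ideal_elem[OF f \<open>keys (x_part \<mu>) \<subseteq> V1\<close>] by simp
    finally show "nf_functional a0 b0 (single \<mu> c * ren_poly Inl f) = 0" .
  qed
  moreover have "ren_poly Inr g \<in> shift_annihilated" if g: "g \<in> J" for g :: "(nat, 'k) mpoly"
    unfolding shift_annihilated_def
  proof (intro CollectI conjI allI impI)
    show "ren_poly Inr g \<in> polys_in vars_xy"
      using Y.I_subset g by (intro polys_in_ren_poly) (auto simp: vars_xy_def)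
    fix \<mu> :: "nat + nat \<Rightarrow>\<^sub>0 nat" and c :: 'k and a0 b0 assume "keys \<mu> \<subseteq> vars_xy"
    then have "keys (y_part \<mu>) \<subseteq> V2" unfolding vars_xy_def by (rule keys_y_part)
    have "nf_functional a0 b0 (single \<mu> c * ren_poly Inr g)
        = c * lookup (X.normal_form (x_part \<mu>)) a0
            * (\<Sum>a\<in>keys g. lookup g a * lookup (Y.normal_form (y_part \<mu> + a)) b0)"
      unfolding single_mult_ren_poly nf_functional_sum nf_functional_single nf_coeff_def
        x_part_add y_part_add
      by (simp add: sum_distrib_left ac_simps)
    also have "\<dots> = 0"
      using Y.normal_form_shift_ideal_elem[OF g \<open>keys (y_part \<mu>) \<subseteq> V2\<close>] by simp
    finally show "nf_functional a0 b0 (single \<mu> c * ren_poly Inr g) = 0" .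
  qed
  ultimately show ?thesis by blast
qed

lemma sum_ideal_subset: "sum_ideal \<subseteq> shift_annihilated"
  unfolding sum_ideal_def
  by (rule ideal_gen_least[OF is_ideal_in_shift_annihilated generators_shift_annihilated])

lemma is_ideal_in_sum_ideal: "is_ideal_in (polys_in vars_xy) sum_ideal"
  unfolding sum_ideal_def
  by (rule ideal_in_ideal_gen) (use generators_shift_annihilated shift_annihilated_def in blast)

lemma nf_functional_sum_ideal:
  assumes "p \<in> sum_ideal"
  shows "nf_functional a0 b0 p = 0"
proof -
  have "p \<in> shift_annihilated" using assms sum_ideal_subset by blast
  moreover have "keys (0 :: nat + nat \<Rightarrow>\<^sub>0 nat) \<subseteq> vars_xy" by simp
  ultimately have "nf_functional a0 b0 (single 0 1 * p) = 0"
    unfolding shift_annihilated_def by blast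
  then show ?thesis by simp
qed

lemma nf_coeff_self:
  assumes "keys (x_part \<mu>) \<subseteq> V1" "keys (y_part \<mu>) \<subseteq> V2" "x_part \<mu> \<in> X.std" "y_part \<mu> \<in> Y.std"
  shows "nf_coeff (x_part \<mu>) (y_part \<mu>) \<mu> = 1"
  using assms by (simp add: nf_coeff_def X.normal_form_std Y.normal_form_std)

text \<open>The normal form of a nonstandard monomial only involves monomials of smaller weight.\<close>

lemma nf_coeff_eq_0:
  assumes \<nu>: "keys (x_part \<nu>) \<subseteq> V1" "keys (y_part \<nu>) \<subseteq> V2" and "\<nu> \<noteq> \<mu>"
    and std: "x_part \<mu> \<in> X.std" "y_part \<mu> \<in> Y.std"
    and le: "wdeg (weight_xy w1 w2) \<nu> \<le> wdeg (weight_xy w1 w2) \<mu>"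
  shows "nf_coeff (x_part \<mu>) (y_part \<mu>) \<nu> = 0"
proof (rule ccontr)
  let ?a = "x_part \<mu>" and ?b = "y_part \<mu>"
  assume "nf_coeff ?a ?b \<nu> \<noteq> 0"
  then have k: "?a \<in> keys (X.normal_form (x_part \<nu>))" "?b \<in> keys (Y.normal_form (y_part \<nu>))"
    by (auto simp: nf_coeff_def in_keys_iff)
  show False
  proof (cases "x_part \<nu> \<in> X.std \<and> y_part \<nu> \<in> Y.std")
    case True
    then have "?a = x_part \<nu>" "?b = y_part \<nu>"
      using k \<nu> by (simp_all add: X.normal_form_std Y.normal_form_std split: if_splits)
    then show False using \<open>\<nu> \<noteq> \<mu>\<close> x_y_part_eqI by metis
  next
    case False
    have "wdeg w1 ?a \<le> wdeg w1 (x_part \<nu>)" "wdeg w2 ?b \<le> wdeg w2 (y_part \<nu>)"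
      using X.normal_form(3) Y.normal_form(3) k \<nu> by blast+
    moreover have "wdeg w1 ?a < wdeg w1 (x_part \<nu>) \<or> wdeg w2 ?b < wdeg w2 (y_part \<nu>)"
      using False X.wdeg_normal_form_nonstd Y.wdeg_normal_form_nonstd k \<nu> by blast
    ultimately show False using le unfolding wdeg_weight_xy by linarith
  qed
qed

text \<open>Standard monomials x^a y^b are linearly independent modulo I + J: the functional
  nf_functional (x_part \<mu>0) (y_part \<mu>0) vanishes on I + J but detects the monomial \<mu>0 of
  maximal weight.\<close>

lemma top_key_nonstandard:
  assumes p: "p \<in> sum_ideal" and \<mu>0: "\<mu>0 \<in> keys p"
    and top: "\<forall>\<nu>\<in>keys p. wdeg (weight_xy w1 w2) \<nu> \<le> wdeg (weight_xy w1 w2) \<mu>0"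
  shows "x_part \<mu>0 \<notin> X.std \<or> y_part \<mu>0 \<notin> Y.std"
proof (rule ccontr)
  assume "\<not> ?thesis"
  then have std: "x_part \<mu>0 \<in> X.std" "y_part \<mu>0 \<in> Y.std" by blast+
  have vars: "keys (x_part \<nu>) \<subseteq> V1" "keys (y_part \<nu>) \<subseteq> V2" if "\<nu> \<in> keys p" for \<nu>
    using polys_inD[OF subsetD[OF ideal_in_subset[OF is_ideal_in_sum_ideal] p] that]
    by (simp_all add: vars_xy_def keys_x_part keys_y_part)
  have "nf_functional (x_part \<mu>0) (y_part \<mu>0) p = lookup p \<mu>0"
    unfolding nf_functional_def sum.remove[OF finite_keys \<mu>0]
    using nf_coeff_self[OF vars[OF \<mu>0] std] nf_coeff_eq_0[OF vars _ std] top by simp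
  then show False using nf_functional_sum_ideal[OF p] \<mu>0 by (simp add: in_keys_iff)
qed

end

section \<open>The toric ideal of the bipartite graph G_Q\<close>

definition binom :: "('v \<Rightarrow>\<^sub>0 nat) \<Rightarrow> ('v \<Rightarrow>\<^sub>0 nat) \<Rightarrow> ('v, 'k::comm_ring_1) mpoly" where
  "binom a b = single a 1 - single b 1"

definition cycle_ideal :: "(nat \<times> nat) set \<Rightarrow> (nat \<times> nat, 'k::comm_ring_1) mpoly set" where
  "cycle_ideal Q = ideal_gen (polys_in Q) (H_Q Q)"

definition mon_of_edges :: "(nat \<Rightarrow> nat \<times> nat) \<Rightarrow> nat set \<Rightarrow> (nat \<times> nat \<Rightarrow>\<^sub>0 nat)" where
  "mon_of_edges E S = (\<Sum>i\<in>S. single (E i) 1)"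

lemma keys_mon_of_edges: "keys (mon_of_edges E S) \<subseteq> E ` S"
  unfolding mon_of_edges_def by (rule keys_sum_single_subset)

lemma mdeg_mon_of_edges: "finite S \<Longrightarrow> mdeg (mon_of_edges E S) = card S"
  unfolding mon_of_edges_def by (simp add: additive_sum[of mdeg, OF mdeg_add mdeg_zero])

lemma keys_mon_of_edges_subset: "(\<And>i. i \<in> S \<Longrightarrow> E i \<in> Q) \<Longrightarrow> keys (mon_of_edges E S) \<subseteq> Q"
  using keys_mon_of_edges by blast

lemma in_keys_mon_of_edges: "finite S \<Longrightarrow> i \<in> S \<Longrightarrow> E i \<in> keys (mon_of_edges E S)"
  unfolding mon_of_edges_def in_keys_iff lookup_sum_single_when by (auto simp: card_gt_0_iff)

lemma lookup_mon_of_edges_inj: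
  assumes "inj_on E S" "finite S"
  shows "lookup (mon_of_edges E S) u = (if u \<in> E ` S then 1 else 0)"
proof -
  have "{i \<in> S. E i = u} = (if u \<in> E ` S then {the_inv_into S E u} else {})"
    using assms(1) by (auto simp: the_inv_into_f_f inj_on_eq_iff)
  then show ?thesis unfolding mon_of_edges_def lookup_sum_single_when[OF assms(2)] by simp
qed

lemma mon_phi_mon_of_edges:
  "mon_phi (mon_of_edges E S) = (\<Sum>i\<in>S. single (Inl (fst (E i))) 1) + (\<Sum>i\<in>S. single (Inr (snd (E i))) 1)"
  unfolding mon_of_edges_def by (rule mon_phi_sum)

lemma sum_rotate_Suc:
  assumes "0 < (l::nat)"
  shows "(\<Sum>i<l. g (Suc i mod l)) = (\<Sum>i<l. g i)"
proof -
  obtain m where l: "l = Suc m" using assms gr0_implies_Suc by blast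
  have "(\<Sum>i<Suc m. g (Suc i mod Suc m)) = (\<Sum>i<m. g (Suc i)) + g 0"
    by (simp add: sum.lessThan_Suc)
  also have "\<dots> = (\<Sum>i<Suc m. g i)"
    by (simp add: sum.lessThan_Suc_shift add.commute del: sum.lessThan_Suc)
  finally show ?thesis using l by simp
qed

lemma sum_rotate:
  assumes "0 < (l::nat)"
  shows "(\<Sum>i<l. g ((i + p) mod l)) = (\<Sum>i<l. g i)"
proof (induction p)
  case (Suc p)
  have "(\<Sum>i<l. g ((i + Suc p) mod l)) = (\<Sum>i<l. g ((Suc i mod l + p) mod l))"
    by (simp add: mod_simps)
  also have "\<dots> = (\<Sum>i<l. g ((i + p) mod l))"
    using sum_rotate_Suc[OF assms, of "\<lambda>i. g ((i + p) mod l)"] .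
  finally show ?case using Suc.IH by simp
qed (simp add: atLeast0LessThan[symmetric])

lemma mon_phi_closed_walk:
  assumes "0 < l"
  shows "mon_phi (mon_of_edges (\<lambda>i. (J i, K i)) {..<l})
       = mon_phi (mon_of_edges (\<lambda>i. (J (Suc i mod l), K i)) {..<l})"
  unfolding mon_phi_mon_of_edges fst_conv snd_conv
    sum_rotate_Suc[OF assms, of "\<lambda>i. single (Inl (J i)) 1"] ..

lemma cycle_binomial_eq_binom:
  "cycle_binomial js ks = binom (mon_of_edges (\<lambda>i. (js ! i, ks ! i)) {..<length js})
     (mon_of_edges (\<lambda>i. (js ! (Suc i mod length js), ks ! i)) {..<length js})"
  by (simp add: cycle_binomial_def binom_def mon_of_edges_def Let_def)

lemma mon_phi_cycle_binomial:
  assumes "induced_cycle Q js ks"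
  obtains a b where "cycle_binomial js ks = binom a b" "mon_phi a = mon_phi b"
    and "keys a \<subseteq> Q" "keys b \<subseteq> Q"
proof
  let ?l = "length js"
  have "0 < ?l" and edges: "\<forall>i<?l. (js ! i, ks ! i) \<in> Q \<and> (js ! (Suc i mod ?l), ks ! i) \<in> Q"
    using assms unfolding induced_cycle_def Let_def by auto
  show "cycle_binomial js ks = binom (mon_of_edges (\<lambda>i. (js ! i, ks ! i)) {..<?l})
     (mon_of_edges (\<lambda>i. (js ! (Suc i mod ?l), ks ! i)) {..<?l})"
    by (rule cycle_binomial_eq_binom)
  show "mon_phi (mon_of_edges (\<lambda>i. (js ! i, ks ! i)) {..<?l})
      = mon_phi (mon_of_edges (\<lambda>i. (js ! (Suc i mod ?l), ks ! i)) {..<?l})"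
    by (rule mon_phi_closed_walk[OF \<open>0 < ?l\<close>])
  show "keys (mon_of_edges (\<lambda>i. (js ! i, ks ! i)) {..<?l}) \<subseteq> Q"
    "keys (mon_of_edges (\<lambda>i. (js ! (Suc i mod ?l), ks ! i)) {..<?l}) \<subseteq> Q"
    using keys_mon_of_edges edges by fastforce+
qed

lemma phi_binom: "mon_phi a = mon_phi b \<Longrightarrow> phi (binom a b :: (nat \<times> nat, 'k::comm_ring_1) mpoly) = 0"
  by (simp add: binom_def phi_diff)

lemma polys_in_binom: "keys a \<subseteq> Q \<Longrightarrow> keys b \<subseteq> Q \<Longrightarrow> (binom a b :: ('v, 'k::comm_ring_1) mpoly) \<in> polys_in Q"
  by (simp add: binom_def polys_in_diff polys_in_single)

lemma H_Q_subset: "H_Q Q \<subseteq> (polys_in Q :: (nat \<times> nat, 'k::comm_ring_1) mpoly set)"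
proof
  fix x :: "(nat \<times> nat, 'k) mpoly" assume "x \<in> H_Q Q"
  then obtain js ks where "induced_cycle Q js ks" "x = cycle_binomial js ks"
    unfolding H_Q_def by blast
  then show "x \<in> polys_in Q" by (metis mon_phi_cycle_binomial polys_in_binom)
qed

lemma is_ideal_in_cycle_ideal: "is_ideal_in (polys_in Q) (cycle_ideal Q :: (nat \<times> nat, 'k::comm_ring_1) mpoly set)"
  unfolding cycle_ideal_def by (rule ideal_in_ideal_gen[OF H_Q_subset])

lemma binom_same [simp]: "binom a a = 0"
  by (simp add: binom_def)

lemma binom_add_in_cycle_ideal:
  fixes a b c d :: "nat \<times> nat \<Rightarrow>\<^sub>0 nat"
  assumes "(binom a b :: (nat \<times> nat, 'k::comm_ring_1) mpoly) \<in> cycle_ideal Q"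
    and "(binom c d :: (nat \<times> nat, 'k) mpoly) \<in> cycle_ideal Q"
    and "keys b \<subseteq> Q" "keys c \<subseteq> Q"
  shows "(binom (a + c) (b + d) :: (nat \<times> nat, 'k) mpoly) \<in> cycle_ideal Q"
proof -
  have "binom (a + c) (b + d) = single c 1 * binom a b + single b 1 * (binom c d :: (nat \<times> nat, 'k) mpoly)"
    by (simp add: binom_def right_diff_distrib mult_single add.commute)
  then show ?thesis
    using assms is_ideal_in_cycle_ideal[of Q]
    by (metis ideal_in_add ideal_in_mult polys_in_single)
qed

lemma mon_le_decomp:
  fixes a c :: "'v \<Rightarrow>\<^sub>0 nat"
  assumes "\<And>v. lookup c v \<le> lookup a v"
  shows "a = c + (a - c)" and "keys (a - c) \<subseteq> keys a" and "mdeg a = mdeg c + mdeg (a - c)"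
proof -
  show a: "a = c + (a - c)"
    by (rule poly_mapping_eqI) (simp add: lookup_add lookup_minus assms)
  show "keys (a - c) \<subseteq> keys a"
    by (auto simp: in_keys_iff lookup_minus)
  show "mdeg a = mdeg c + mdeg (a - c)"
    by (subst a) (simp add: mdeg_add)
qed

definition alt_closed_walk :: "(nat \<times> nat) set \<Rightarrow> (nat \<times> nat) set \<Rightarrow> nat \<Rightarrow> (nat \<Rightarrow> nat) \<Rightarrow> (nat \<Rightarrow> nat) \<Rightarrow> bool" where
  "alt_closed_walk A B l J K \<longleftrightarrow> 0 < l \<and> (\<forall>i<l. (J i, K i) \<in> A \<and> (J (Suc i mod l), K i) \<in> B)"

lemma alt_closed_walk_exists:
  assumes "finite A" "x0 \<in> A"
    and A_B: "\<And>j k. (j, k) \<in> A \<Longrightarrow> \<exists>j'. (j', k) \<in> B"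
    and B_A: "\<And>j k. (j, k) \<in> B \<Longrightarrow> \<exists>k'. (j, k') \<in> A"
  obtains l J K where "alt_closed_walk A B l J K"
proof -
  define next_edge where
    "next_edge x = (let j = (SOME j. (j, snd x) \<in> B) in (j, SOME k. (j, k) \<in> A))" for x :: "nat \<times> nat"
  have next_edge: "next_edge x \<in> A \<and> (fst (next_edge x), snd x) \<in> B" if "x \<in> A" for x
  proof -
    have jB: "((SOME j. (j, snd x) \<in> B), snd x) \<in> B"
      using A_B[of "fst x" "snd x"] that by (auto intro: someI)
    then have "((SOME j. (j, snd x) \<in> B), SOME k. ((SOME j. (j, snd x) \<in> B), k) \<in> A) \<in> A"
      using someI_ex[OF B_A] by blast
    with jB show ?thesis by (simp add: next_edge_def Let_def)
  qed
  define x where "x n = (next_edge ^^ n) x0" for n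
  have x_A: "x n \<in> A" for n by (induction n) (auto simp: x_def assms(2) next_edge)
  have x_Suc: "x (Suc n) = next_edge (x n)" for n by (simp add: x_def)
  have "\<not> inj (\<lambda>n. fst (x n))"
    using finite_subset[of "range (\<lambda>n. fst (x n))" "fst ` A"] x_A assms(1)
      finite_imageD[of "\<lambda>n. fst (x n)" UNIV] by blast
  then obtain n1 n2 where n12: "n1 < n2" "fst (x n1) = fst (x n2)"
    unfolding inj_def by (metis linorder_neqE_nat)
  have "alt_closed_walk A B (n2 - n1) (\<lambda>i. fst (x (n1 + i))) (\<lambda>i. snd (x (n1 + i)))"
    unfolding alt_closed_walk_def
  proof (intro conjI allI impI)
    fix i assume i: "i < n2 - n1"
    have "fst (x (n1 + Suc i mod (n2 - n1))) = fst (next_edge (x (n1 + i)))"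
    proof (cases "Suc i < n2 - n1")
      case True
      then show ?thesis using x_Suc by simp
    next
      case False
      then have "Suc i = n2 - n1" using i by simp
      then have "n1 + Suc i mod (n2 - n1) = n1" "n2 = Suc (n1 + i)" using n12(1) by auto
      then show ?thesis using n12(2) x_Suc by metis
    qed
    then show "(fst (x (n1 + Suc i mod (n2 - n1))), snd (x (n1 + i))) \<in> B"
      using next_edge[OF x_A] by simp
  qed (use n12 x_A in auto)
  then show ?thesis by (rule that)
qed

lemma alt_closed_walk_segment:
  assumes "alt_closed_walk A B l J K" "0 < n" "s + n \<le> l" "(J s, K (s + n - 1)) \<in> B"
  shows "alt_closed_walk A B n (\<lambda>i. J (s + i)) (\<lambda>i. K (s + i))"
  unfolding alt_closed_walk_def
proof (intro conjI allI impI)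
  fix i assume i: "i < n"
  show "(J (s + i), K (s + i)) \<in> A" using assms(1,3) i by (simp add: alt_closed_walk_def)
  show "(J (s + Suc i mod n), K (s + i)) \<in> B"
  proof (cases "Suc i < n")
    case True
    then have "Suc (s + i) < l" using assms(3) by simp
    then have "(J (Suc (s + i) mod l), K (s + i)) \<in> B"
      using assms(1) Suc_lessD unfolding alt_closed_walk_def by blast
    then show ?thesis using True \<open>Suc (s + i) < l\<close> by simp
  next
    case False
    then have "Suc i = n" using i by simp
    then show ?thesis using assms(4) by auto
  qed
qed (use assms in simp)

lemma alt_closed_walk_shorten:
  assumes walk: "alt_closed_walk A B l J K" and pq: "p < q" "q < l" and "J p = J q \<or> K p = K q"
  obtains J' K' where "alt_closed_walk A B (q - p) J' K'"
proof -
  have B_edge: "(J (Suc i), K i) \<in> B" if "Suc i < l" for i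
    using walk that Suc_lessD unfolding alt_closed_walk_def by (metis mod_less)
  show ?thesis
  proof (cases "J p = J q")
    case True
    then have "(J p, K (p + (q - p) - 1)) \<in> B" using B_edge[of "q - 1"] pq by simp
    then have "alt_closed_walk A B (q - p) (\<lambda>i. J (p + i)) (\<lambda>i. K (p + i))"
      using pq by (intro alt_closed_walk_segment[OF walk]) auto
    then show ?thesis by (rule that)
  next
    case False
    then have "(J (Suc p), K (Suc p + (q - p) - 1)) \<in> B"
      using B_edge[of p] pq \<open>J p = J q \<or> K p = K q\<close> by simp
    then have "alt_closed_walk A B (q - p) (\<lambda>i. J (Suc p + i)) (\<lambda>i. K (Suc p + i))"
      using pq by (intro alt_closed_walk_segment[OF walk]) auto
    then show ?thesis by (rule that)
  qed
qed

text \<open>A shortest alternating closed walk is a cycle.\<close>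

lemma simple_alt_closed_walk_exists:
  assumes "alt_closed_walk A B l0 J0 K0" and "A \<inter> B = {}"
  obtains l J K where "alt_closed_walk A B l J K" "inj_on J {..<l}" "inj_on K {..<l}" "2 \<le> l"
proof -
  obtain l where l: "\<exists>J K. alt_closed_walk A B l J K"
      "\<And>l'. l' < l \<Longrightarrow> \<not> (\<exists>J K. alt_closed_walk A B l' J K)"
    using assms(1) exists_least_iff[of "\<lambda>l. \<exists>J K. alt_closed_walk A B l J K"] by blast
  then obtain J K where walk: "alt_closed_walk A B l J K" by blast
  have "2 \<le> l"
  proof (rule ccontr)
    assume "\<not> 2 \<le> l"
    then have "l = 1" using walk by (simp add: alt_closed_walk_def)
    then show False using walk assms(2) by (auto simp: alt_closed_walk_def)
  qed
  have no_repeat: "\<not> (f p = f q)" if "p < q" "q < l" "f = J \<or> f = K" for f p q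
    using alt_closed_walk_shorten[OF walk that(1,2)] l(2)[of "q - p"] that by auto
  have "inj_on J {..<l}" "inj_on K {..<l}"
    using no_repeat unfolding inj_on_def by (metis lessThan_iff linorder_neqE_nat)+
  then show ?thesis using that walk \<open>2 \<le> l\<close> by blast
qed

definition toric_binoms_below :: "(nat \<times> nat, 'k::comm_ring_1) mpoly set \<Rightarrow> (nat \<times> nat) set \<Rightarrow> nat \<Rightarrow> bool" where
  "toric_binoms_below H Q d \<longleftrightarrow> (\<forall>a b. mdeg a < d \<longrightarrow> keys a \<subseteq> Q \<longrightarrow> keys b \<subseteq> Q \<longrightarrow>
     mon_phi a = mon_phi b \<longrightarrow> binom a b \<in> H)"

lemma binom_in_cycle_ideal_split:
  assumes IH: "toric_binoms_below (cycle_ideal Q :: (nat \<times> nat, 'k::comm_ring_1) mpoly set) Q (mdeg a)"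
    and Q: "keys a \<subseteq> Q" "keys b \<subseteq> Q" and phi: "mon_phi a = mon_phi b"
    and le: "\<And>u. lookup c u \<le> lookup a u" "\<And>u. lookup d u \<le> lookup b u"
    and "c \<noteq> 0" and phi_cd: "mon_phi c = mon_phi d"
    and cd: "(binom c d :: (nat \<times> nat, 'k) mpoly) \<in> cycle_ideal Q"
  shows "(binom a b :: (nat \<times> nat, 'k) mpoly) \<in> cycle_ideal Q"
proof -
  note a = mon_le_decomp[OF le(1)] and b = mon_le_decomp[OF le(2)]
  have "mon_phi c + mon_phi (a - c) = mon_phi d + mon_phi (b - d)"
    using phi by (simp only: mon_phi_add[symmetric] a(1)[symmetric] b(1)[symmetric])
  then have "mon_phi (a - c) = mon_phi (b - d)" using phi_cd by simp
  moreover have "mdeg (a - c) < mdeg a" using a(3) \<open>c \<noteq> 0\<close> mdeg_eq_0_iff[of c] by linarith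
  moreover have Q': "keys (a - c) \<subseteq> Q" "keys (b - d) \<subseteq> Q" "keys d \<subseteq> Q"
    using a(2) b(1,2) Q keys_add_mon[of d "b - d"] by auto
  ultimately have "(binom (a - c) (b - d) :: (nat \<times> nat, 'k) mpoly) \<in> cycle_ideal Q"
    using IH unfolding toric_binoms_below_def by simp
  then have "(binom (c + (a - c)) (d + (b - d)) :: (nat \<times> nat, 'k) mpoly) \<in> cycle_ideal Q"
    using binom_add_in_cycle_ideal[OF cd] Q'(1,3) by blast
  then show ?thesis by (simp only: a(1)[symmetric] b(1)[symmetric])
qed

lemma binom_in_cycle_ideal_common_var:
  assumes IH: "toric_binoms_below (cycle_ideal Q :: (nat \<times> nat, 'k::comm_ring_1) mpoly set) Q (mdeg a)"
    and Q: "keys a \<subseteq> Q" "keys b \<subseteq> Q" and phi: "mon_phi a = mon_phi b"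
    and v: "v \<in> keys a" "v \<in> keys b"
  shows "(binom a b :: (nat \<times> nat, 'k) mpoly) \<in> cycle_ideal Q"
proof (rule binom_in_cycle_ideal_split[OF IH Q phi])
  have "lookup (single v 1) u \<le> lookup p u" if "v \<in> keys p" for u and p :: "nat \<times> nat \<Rightarrow>\<^sub>0 nat"
    using that by (cases "u = v") (simp_all add: lookup_single in_keys_iff Suc_le_eq)
  then show "lookup (single v 1) u \<le> lookup a u" "lookup (single v 1) u \<le> lookup b u" for u
    using v by blast+
  show "(binom (single v 1) (single v 1) :: (nat \<times> nat, 'k) mpoly) \<in> cycle_ideal Q"
    using ideal_in_zero[OF is_ideal_in_cycle_ideal] by simp
  show "single v (1::nat) \<noteq> 0" by (metis lookup_single_eq lookup_zero one_neq_zero)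
qed simp

lemma mon_phi_chord_detour:
  assumes "q < l"
  shows "mon_phi (mon_of_edges (\<lambda>i. (J (Suc i), K i)) {..<q} + single (J 0, K q) 1
      + mon_of_edges (\<lambda>i. (J i, K i)) {Suc q..<l}) = mon_phi (mon_of_edges (\<lambda>i. (J i, K i)) {..<l})"
proof -
  let ?X = "\<lambda>j. single (Inl j) (1::nat)" and ?Y = "\<lambda>k. single (Inr k) (1::nat)"
  have split: "(\<Sum>i<l. f i) = (\<Sum>i<Suc q. f i) + (\<Sum>i\<in>{Suc q..<l}. f i)" for f :: "nat \<Rightarrow> nat + nat \<Rightarrow>\<^sub>0 nat"
    using sum.atLeastLessThan_concat[of 0 "Suc q" l f] assms by (simp add: atLeast0LessThan)
  have "mon_phi (mon_of_edges (\<lambda>i. (J (Suc i), K i)) {..<q} + single (J 0, K q) 1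
      + mon_of_edges (\<lambda>i. (J i, K i)) {Suc q..<l})
      = ((?X (J 0) + (\<Sum>i<q. ?X (J (Suc i)))) + (\<Sum>i\<in>{Suc q..<l}. ?X (J i)))
        + (((\<Sum>i<q. ?Y (K i)) + ?Y (K q)) + (\<Sum>i\<in>{Suc q..<l}. ?Y (K i)))"
    by (simp add: mon_phi_add mon_phi_mon_of_edges mon_phi_single ac_simps)
  also have "\<dots> = (\<Sum>i<l. ?X (J i)) + (\<Sum>i<l. ?Y (K i))"
    by (simp only: split sum.lessThan_Suc_shift[where g = "\<lambda>i. ?X (J i)"]
        sum.lessThan_Suc[where g = "\<lambda>i. ?Y (K i)"])
  finally show ?thesis by (simp add: mon_phi_mon_of_edges)
qed

text \<open>A chord (J 0, K q) splits the cycle binomial into two binomials sharing a variable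
  with the intermediate monomial that uses the chord instead of the edges
  (J 0, K 0), ..., (J q, K q).\<close>

lemma binom_cycle_with_chord:
  assumes IH: "toric_binoms_below (cycle_ideal Q :: (nat \<times> nat, 'k::comm_ring_1) mpoly set) Q l"
    and edges: "\<And>i. i < l \<Longrightarrow> (J i, K i) \<in> Q" "\<And>i. i < l \<Longrightarrow> (J (Suc i mod l), K i) \<in> Q"
    and q: "0 < q" "q < l - 1" and chord: "(J 0, K q) \<in> Q"
  shows "(binom (mon_of_edges (\<lambda>i. (J i, K i)) {..<l}) (mon_of_edges (\<lambda>i. (J (Suc i mod l), K i)) {..<l})
      :: (nat \<times> nat, 'k) mpoly) \<in> cycle_ideal Q"
proof -
  define a where "a = mon_of_edges (\<lambda>i. (J i, K i)) {..<l}"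
  define b where "b = mon_of_edges (\<lambda>i. (J (Suc i mod l), K i)) {..<l}"
  define m1 where "m1 = mon_of_edges (\<lambda>i. (J (Suc i), K i)) {..<q}"
  define m3 where "m3 = mon_of_edges (\<lambda>i. (J i, K i)) {Suc q..<l}"
  define m where "m = m1 + single (J 0, K q) 1 + m3"
  have "0 < l" "Suc 0 < l" using q by simp_all
  have a_Q: "keys a \<subseteq> Q"
    unfolding a_def by (rule keys_mon_of_edges_subset) (simp add: edges)
  have b_Q: "keys b \<subseteq> Q"
    unfolding b_def by (rule keys_mon_of_edges_subset) (simp add: edges)
  have "keys m3 \<subseteq> Q"
    unfolding m3_def by (rule keys_mon_of_edges_subset) (simp add: edges)
  moreover have "(J (Suc i), K i) \<in> Q" if "i < q" for i
    using edges(2)[of i] that q by simp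
  then have "keys m1 \<subseteq> Q" unfolding m1_def by (rule keys_mon_of_edges_subset) simp
  ultimately have m_Q: "keys m \<subseteq> Q" using chord by (simp add: m_def keys_add_mon)
  have deg_a: "mdeg a = l" and deg_m: "mdeg m = l"
    using q by (simp_all add: a_def m_def m1_def m3_def mdeg_add mdeg_mon_of_edges)
  have phi_m: "mon_phi m = mon_phi a"
    unfolding m_def m1_def m3_def a_def using q by (intro mon_phi_chord_detour) simp
  have phi_b: "mon_phi a = mon_phi b"
    unfolding a_def b_def by (rule mon_phi_closed_walk[OF \<open>0 < l\<close>])
  have "(J (l - 1), K (l - 1)) \<in> keys a" "(J (l - 1), K (l - 1)) \<in> keys m3"
    using q in_keys_mon_of_edges[where E = "\<lambda>i. (J i, K i)" and i = "l - 1"]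
    by (simp_all add: a_def m3_def)
  then have am: "(binom a m :: (nat \<times> nat, 'k) mpoly) \<in> cycle_ideal Q"
    using binom_in_cycle_ideal_common_var[OF IH[folded deg_a] a_Q m_Q phi_m[symmetric]]
    by (simp add: m_def keys_add_mon)
  have "(J 1, K 0) \<in> keys m1" "(J 1, K 0) \<in> keys b"
    using q \<open>Suc 0 < l\<close> in_keys_mon_of_edges[where i = 0, of "{..<q}" "\<lambda>i. (J (Suc i), K i)"]
      in_keys_mon_of_edges[where i = 0, of "{..<l}" "\<lambda>i. (J (Suc i mod l), K i)"]
    by (simp_all add: m1_def b_def)
  then have mb: "(binom m b :: (nat \<times> nat, 'k) mpoly) \<in> cycle_ideal Q"
    using binom_in_cycle_ideal_common_var[OF IH[folded deg_m] m_Q b_Q phi_m[unfolded phi_b]]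
    by (simp add: m_def keys_add_mon) blast
  have "binom a b = binom a m + (binom m b :: (nat \<times> nat, 'k) mpoly)"
    by (simp add: binom_def)
  then show ?thesis
    using ideal_in_add[OF is_ideal_in_cycle_ideal am mb] by (simp add: a_def b_def)
qed

lemma chord_rotation_index:
  fixes p q l :: nat
  assumes "p < l" "q < l" "p \<noteq> q" "p \<noteq> Suc q mod l"
  shows "0 < (q + (l - p)) mod l" "(q + (l - p)) mod l < l - 1" "((q + (l - p)) mod l + p) mod l = q"
proof -
  have "(q + (l - p)) mod l = (if q < p then q + (l - p) else q - p)"
  proof (cases "q < p")
    case False
    then have "q + (l - p) = (q - p) + l" using assms(1) by simp
    then have "(q + (l - p)) mod l = q - p" using assms(2) by (simp only: mod_add_self2) simp
    then show ?thesis using False by simp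
  qed (use assms(1) in simp)
  moreover have "q + 1 \<noteq> p" "q - p \<noteq> l - 1 \<or> q < p"
    using assms(1,2,4) by (auto simp: mod_Suc split: if_splits)
  ultimately show "0 < (q + (l - p)) mod l" "(q + (l - p)) mod l < l - 1"
      "((q + (l - p)) mod l + p) mod l = q"
    using assms by auto
qed

lemma binom_cycle_with_any_chord:
  assumes IH: "toric_binoms_below (cycle_ideal Q :: (nat \<times> nat, 'k::comm_ring_1) mpoly set) Q l"
    and edges: "\<And>i. i < l \<Longrightarrow> (J i, K i) \<in> Q" "\<And>i. i < l \<Longrightarrow> (J (Suc i mod l), K i) \<in> Q"
    and pq: "p < l" "q < l" "(J p, K q) \<in> Q" "p \<noteq> q" "p \<noteq> Suc q mod l"
  shows "(binom (mon_of_edges (\<lambda>i. (J i, K i)) {..<l}) (mon_of_edges (\<lambda>i. (J (Suc i mod l), K i)) {..<l})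
      :: (nat \<times> nat, 'k) mpoly) \<in> cycle_ideal Q"
proof -
  define q' where "q' = (q + (l - p)) mod l"
  note q' = chord_rotation_index[OF pq(1,2,4,5), folded q'_def]
  define J' where "J' i = J ((i + p) mod l)" for i
  define K' where "K' i = K ((i + p) mod l)" for i
  have "0 < l" using pq by simp
  have rot: "(Suc i mod l + p) mod l = Suc ((i + p) mod l) mod l" for i
    by (simp add: mod_simps)
  have "(binom (mon_of_edges (\<lambda>i. (J' i, K' i)) {..<l}) (mon_of_edges (\<lambda>i. (J' (Suc i mod l), K' i)) {..<l})
      :: (nat \<times> nat, 'k) mpoly) \<in> cycle_ideal Q"
  proof (rule binom_cycle_with_chord[OF IH _ _ q'(1,2)])
    show "(J' i, K' i) \<in> Q" "(J' (Suc i mod l), K' i) \<in> Q" if "i < l" for i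
      using edges[of "(i + p) mod l"] \<open>0 < l\<close> by (simp_all add: J'_def K'_def rot)
    show "(J' 0, K' q') \<in> Q" using pq q' by (simp add: J'_def K'_def)
  qed
  moreover have "mon_of_edges (\<lambda>i. (J' i, K' i)) {..<l} = mon_of_edges (\<lambda>i. (J i, K i)) {..<l}"
    "mon_of_edges (\<lambda>i. (J' (Suc i mod l), K' i)) {..<l} = mon_of_edges (\<lambda>i. (J (Suc i mod l), K i)) {..<l}"
    unfolding mon_of_edges_def J'_def K'_def rot
    by (rule sum_rotate[OF \<open>0 < l\<close>])+
  ultimately show ?thesis by simp
qed

lemma binom_simple_cycle_in_cycle_ideal:
  assumes IH: "toric_binoms_below (cycle_ideal Q :: (nat \<times> nat, 'k::comm_ring_1) mpoly set) Q l"
    and l: "2 \<le> l" and inj: "inj_on J {..<l}" "inj_on K {..<l}"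
    and edges: "\<And>i. i < l \<Longrightarrow> (J i, K i) \<in> Q" "\<And>i. i < l \<Longrightarrow> (J (Suc i mod l), K i) \<in> Q"
  shows "(binom (mon_of_edges (\<lambda>i. (J i, K i)) {..<l}) (mon_of_edges (\<lambda>i. (J (Suc i mod l), K i)) {..<l})
      :: (nat \<times> nat, 'k) mpoly) \<in> cycle_ideal Q"
proof (cases "induced_cycle Q (map J [0..<l]) (map K [0..<l])")
  case True
  then have "cycle_binomial (map J [0..<l]) (map K [0..<l]) \<in> (H_Q Q :: (nat \<times> nat, 'k) mpoly set)"
    unfolding H_Q_def by blast
  then have "cycle_binomial (map J [0..<l]) (map K [0..<l]) \<in> (cycle_ideal Q :: (nat \<times> nat, 'k) mpoly set)"
    unfolding cycle_ideal_def using ideal_gen_subset by blast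
  moreover have "(cycle_binomial (map J [0..<l]) (map K [0..<l]) :: (nat \<times> nat, 'k) mpoly)
      = binom (mon_of_edges (\<lambda>i. (J i, K i)) {..<l}) (mon_of_edges (\<lambda>i. (J (Suc i mod l), K i)) {..<l})"
    unfolding cycle_binomial_eq_binom length_map length_upt diff_zero mon_of_edges_def
    using l by (intro arg_cong2[where f = binom] sum.cong) simp_all
  ultimately show ?thesis by simp
next
  case False
  have "distinct (map J [0..<l])" "distinct (map K [0..<l])"
    using inj by (simp_all add: distinct_map atLeast0LessThan)
  then obtain p q where "p < l" "q < l" "(J p, K q) \<in> Q" "p \<noteq> q" "p \<noteq> Suc q mod l"
    using False l edges unfolding induced_cycle_def Let_def by auto
  then show ?thesis using binom_cycle_with_any_chord[of Q l J K, OF IH edges] by blast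
qed

lemma lookup_mon_of_edges_le:
  assumes "inj_on E S" "finite S" "E ` S \<subseteq> keys a"
  shows "lookup (mon_of_edges E S) u \<le> lookup a u"
  using assms(3) by (auto simp: lookup_mon_of_edges_inj[OF assms(1,2)] in_keys_iff Suc_le_eq)

lemma in_keys_mon_phi:
  "Inl j \<in> keys (mon_phi a) \<longleftrightarrow> j \<in> fst ` keys a"
  "Inr k \<in> keys (mon_phi a) \<longleftrightarrow> k \<in> snd ` keys a"
proof -
  have "lookup (mon_phi a) v = (\<Sum>p\<in>keys a. lookup (single (Inl (fst p)) (lookup a p)) v)
      + (\<Sum>p\<in>keys a. lookup (single (Inr (snd p)) (lookup a p)) v)" for v
    by (simp add: mon_phi_def lookup_sum lookup_add sum.distrib)
  then have "lookup (mon_phi a) (Inl j) = (\<Sum>p\<in>{p\<in>keys a. fst p = j}. lookup a p)"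
    "lookup (mon_phi a) (Inr k) = (\<Sum>p\<in>{p\<in>keys a. snd p = k}. lookup a p)"
    by (simp_all add: lookup_single when_def sum.inter_filter)
  then show "Inl j \<in> keys (mon_phi a) \<longleftrightarrow> j \<in> fst ` keys a"
    "Inr k \<in> keys (mon_phi a) \<longleftrightarrow> k \<in> snd ` keys a"
    by (force simp: in_keys_iff sum_eq_0_iff)+
qed

lemma toric_binoms_below_mono: "toric_binoms_below H Q d \<Longrightarrow> d' \<le> d \<Longrightarrow> toric_binoms_below H Q d'"
  unfolding toric_binoms_below_def by auto

lemma simple_cycle_in_supports:
  assumes phi: "mon_phi a = mon_phi b" and "a \<noteq> 0" and disj: "keys a \<inter> keys b = {}"
  obtains l J K where "2 \<le> l" "inj_on J {..<l}" "inj_on K {..<l}"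
    "\<And>i. i < l \<Longrightarrow> (J i, K i) \<in> keys a" "\<And>i. i < l \<Longrightarrow> (J (Suc i mod l), K i) \<in> keys b"
proof -
  obtain x0 where "x0 \<in> keys a" using \<open>a \<noteq> 0\<close> by (metis all_not_in_conv keys_eq_empty)
  moreover have "\<exists>j'. (j', k) \<in> keys b" if "(j, k) \<in> keys a" for j k
  proof -
    have "k \<in> snd ` keys b" using that phi in_keys_mon_phi(2)[of k] by (metis snd_conv image_eqI)
    then show ?thesis by force
  qed
  moreover have "\<exists>k'. (j, k') \<in> keys a" if "(j, k) \<in> keys b" for j k
  proof -
    have "j \<in> fst ` keys a" using that phi in_keys_mon_phi(1)[of j] by (metis fst_conv image_eqI)
    then show ?thesis by force
  qed
  ultimately obtain l0 J0 K0 where "alt_closed_walk (keys a) (keys b) l0 J0 K0"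
    using alt_closed_walk_exists[OF finite_keys, of x0 a "keys b"] by metis
  then obtain l J K where "alt_closed_walk (keys a) (keys b) l J K"
      "inj_on J {..<l}" "inj_on K {..<l}" "2 \<le> l"
    using simple_alt_closed_walk_exists disj by blast
  then show ?thesis using that by (simp add: alt_closed_walk_def)
qed

text \<open>By induction on the degree: if the two monomials share a variable, it
  is cancelled; otherwise their supports contain the two halves of a cycle of G_Q, whose
  binomial is split off.\<close>

theorem binom_in_cycle_ideal:
  assumes "keys a \<subseteq> Q" "keys b \<subseteq> Q" "mon_phi a = mon_phi b"
  shows "(binom a b :: (nat \<times> nat, 'k::comm_ring_1) mpoly) \<in> cycle_ideal Q"
  using assms
proof (induction "mdeg a" arbitrary: a b rule: less_induct)
  case less
  have IH: "toric_binoms_below (cycle_ideal Q :: (nat \<times> nat, 'k) mpoly set) Q (mdeg a)"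
    unfolding toric_binoms_below_def using less.hyps by blast
  note Q = less.prems(1,2) and phi = less.prems(3)
  consider (zero) "a = 0" | (common) v where "v \<in> keys a" "v \<in> keys b"
    | (disjoint) "a \<noteq> 0" "keys a \<inter> keys b = {}"
    by blast
  then show ?case
  proof cases
    case zero
    then have "b = 0" using mdeg_mon_phi[of a] mdeg_mon_phi[of b] phi by (simp add: mdeg_eq_0_iff)
    then show ?thesis using zero ideal_in_zero[OF is_ideal_in_cycle_ideal] by simp
  next
    case common
    then show ?thesis by (rule binom_in_cycle_ideal_common_var[OF IH Q phi])
  next
    case disjoint
    obtain l J K where l: "2 \<le> l" and inj: "inj_on J {..<l}" "inj_on K {..<l}"
        and edges: "\<And>i. i < l \<Longrightarrow> (J i, K i) \<in> keys a"
          "\<And>i. i < l \<Longrightarrow> (J (Suc i mod l), K i) \<in> keys b"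
      using simple_cycle_in_supports[OF phi disjoint] by blast
    let ?Ca = "mon_of_edges (\<lambda>i. (J i, K i)) {..<l}"
    let ?Cb = "mon_of_edges (\<lambda>i. (J (Suc i mod l), K i)) {..<l}"
    have "inj_on (\<lambda>i. (J i, K i)) {..<l}" "inj_on (\<lambda>i. (J (Suc i mod l), K i)) {..<l}"
      using inj by (auto simp: inj_on_def)
    then have le: "lookup ?Ca u \<le> lookup a u" "lookup ?Cb u \<le> lookup b u" for u
      using edges by (auto intro!: lookup_mon_of_edges_le)
    have "l \<le> mdeg a" using mon_le_decomp(3)[OF le(1)] by (simp add: mdeg_mon_of_edges)
    then have "(binom ?Ca ?Cb :: (nat \<times> nat, 'k) mpoly) \<in> cycle_ideal Q"
      using edges Q
      by (intro binom_simple_cycle_in_cycle_ideal[OF toric_binoms_below_mono[OF IH] l inj]) blast+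
    moreover have "?Ca \<noteq> 0" using l by (metis mdeg_mon_of_edges mdeg_zero card_lessThan finite_lessThan
          not_numeral_le_zero)
    ultimately show ?thesis
      using l by (intro binom_in_cycle_ideal_split[OF IH Q phi le] mon_phi_closed_walk) auto
  qed
qed

lemma phi_eq_0_partner:
  assumes "phi f = 0" "m \<in> keys f"
  shows "\<exists>m'\<in>keys f. m' \<noteq> m \<and> mon_phi m' = mon_phi m"
proof (rule ccontr)
  assume "\<not> ?thesis"
  then have "{m'\<in>keys f. mon_phi m' = mon_phi m} = {m}" using assms(2) by blast
  then have "lookup (phi f) (mon_phi m) = lookup f m" by (simp add: lookup_phi)
  then show False using assms by (simp add: in_keys_iff)
qed

lemma phi_eq_0_imp_in_cycle_ideal:
  fixes f :: "(nat \<times> nat, 'k::comm_ring_1) mpoly"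
  assumes "f \<in> polys_in Q" "phi f = 0"
  shows "f \<in> cycle_ideal Q"
  using assms
proof (induction "card (keys f)" arbitrary: f rule: less_induct)
  case less
  show ?case
  proof (cases "f = 0")
    case True
    then show ?thesis using ideal_in_zero[OF is_ideal_in_cycle_ideal] by simp
  next
    case False
    then obtain m where m: "m \<in> keys f" by fastforce
    define c where "c = lookup f m"
    obtain m' where m': "m' \<in> keys f" "m' \<noteq> m" "mon_phi m' = mon_phi m"
      using phi_eq_0_partner[OF less.prems(2) m] by blast
    have Q: "keys m \<subseteq> Q" "keys m' \<subseteq> Q" using less.prems(1) m m'(1) polys_inD by blast+
    define g where "g = single 0 c * (binom m m' :: (nat \<times> nat, 'k) mpoly)"
    have g: "g = single m c - single m' c"
      by (simp add: g_def binom_def right_diff_distrib mult_single)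
    have g_ideal: "g \<in> cycle_ideal Q"
      unfolding g_def using binom_in_cycle_ideal[OF Q m'(3)[symmetric]]
      by (rule ideal_in_mult[OF is_ideal_in_cycle_ideal polys_in_single, rotated]) simp
    have "keys g \<subseteq> keys f"
      using m m'(1) keys_diff[of "single m c" "single m' c"] by (auto simp: g split: if_splits)
    have "keys (f - g) \<subseteq> keys f - {m}"
    proof
      fix v assume v: "v \<in> keys (f - g)"
      have "v \<noteq> m" using v m'(2) by (auto simp: g lookup_minus c_def lookup_single in_keys_iff)
      moreover have "v \<in> keys f"
        using v keys_diff[of f g] \<open>keys g \<subseteq> keys f\<close> by blast
      ultimately show "v \<in> keys f - {m}" by blast
    qed
    then have "card (keys (f - g)) < card (keys f)"
      using m by (meson card_Diff1_less finite_keys card_mono le_less_trans finite_Diff)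
    moreover have "f - g \<in> polys_in Q"
      using less.prems(1) Q by (simp add: g polys_in_diff polys_in_single)
    moreover have "phi (f - g) = 0" using less.prems(2) m'(3) by (simp add: g phi_diff)
    ultimately have "f - g \<in> cycle_ideal Q" using less.hyps by blast
    then show ?thesis using ideal_in_add[OF is_ideal_in_cycle_ideal _ g_ideal] by fastforce
  qed
qed

section \<open>Lifts of weakly Q-homogeneous polynomials\<close>

lemma valid_order_compatible:
  assumes hom: "\<exists>d. \<forall>m\<in>keys f. mdeg m = d"
    and init: "init w f = single L c" "c \<noteq> 0"
    and vo: "valid_order Q' w f ord"
    and ks: "length ks = length (ord L)" "\<forall>i<length ks. (ord L ! i, ks ! i) \<in> Q'"
    and m: "m \<in> keys f"
  shows "mon_of_list (ord m) = m" "length (ord m) = length ks" "\<forall>i<length ks. (ord m ! i, ks ! i) \<in> Q'"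
proof -
  have L: "lead_mon w f = L" "L \<in> keys f"
    using lead_mon_eq[OF init] init(2) by (auto simp: in_keys_iff)
  then have vo: "mon_of_list (ord m') = m'
      \<and> (\<forall>ks. length ks = length (ord L) \<longrightarrow> (\<forall>i<length ks. (ord L ! i, ks ! i) \<in> Q')
              \<longrightarrow> (\<forall>i<length ks. (ord m' ! i, ks ! i) \<in> Q'))" if "m' \<in> keys f" for m'
    using vo that unfolding valid_order_def Let_def by simp
  show "mon_of_list (ord m) = m" using vo[OF m] by blast
  obtain d where "\<forall>m\<in>keys f. mdeg m = d" using hom by blast
  then have "length (ord m) = length (ord L)"
    using vo[OF m] vo[OF L(2)] m L(2) mdeg_mon_of_list by metis
  then show "length (ord m) = length ks" using ks(1) by simp
  show "\<forall>i<length ks. (ord m ! i, ks ! i) \<in> Q'" using vo[OF m] ks by blast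
qed

text \<open>The parameters describe how an index j of one side and an index k of the other side
  form the variable z_jk: pair = Pair for polynomials in x, and the swapped pair for
  polynomials in y. The variables of the own and the other side are var_own and var_other,
  with weights w and w'.\<close>

locale lift_data =
  fixes pair :: "nat \<Rightarrow> nat \<Rightarrow> nat \<times> nat" and own other :: "nat \<times> nat \<Rightarrow> nat"
    and var_own var_other :: "nat \<Rightarrow> nat + nat" and w w' :: "nat \<Rightarrow> real"
    and wz :: "nat \<times> nat \<Rightarrow> real"
  assumes own_pair [simp]: "own (pair u v) = u" and other_pair [simp]: "other (pair u v) = v"
    and pair_own_other: "pair (own p) (other p) = p"
    and wz_pair: "wz (pair u v) = w u + w' v"
    and mon_phi_pair: "mon_phi (single (pair u v) n) = single (var_own u) n + single (var_other v) n"
begin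

definition pair_mon :: "nat list \<Rightarrow> nat list \<Rightarrow> (nat \<times> nat \<Rightarrow>\<^sub>0 nat)" where
  "pair_mon js ks = (\<Sum>i<length ks. single (pair (js ! i) (ks ! i)) 1)"

definition cofactor :: "nat list \<Rightarrow> (nat + nat \<Rightarrow>\<^sub>0 nat)" where
  "cofactor ks = (\<Sum>i<length ks. single (var_other (ks ! i)) 1)"

lemma lift_eq: "lift pair ord ks f = (\<Sum>m\<in>keys f. single (pair_mon (ord m) ks) (lookup f m))"
  by (simp add: lift_def pair_mon_def)

lemma pair_mon_Cons: "pair_mon (u # js) (k # ks) = single (pair u k) 1 + pair_mon js ks"
  unfolding pair_mon_def length_Cons sum.lessThan_Suc_shift by simp

lemma keys_pair_mon: "keys (pair_mon js ks) \<subseteq> (\<lambda>i. pair (js ! i) (ks ! i)) ` {..<length ks}"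
  unfolding pair_mon_def by (rule keys_sum_single_subset)

lemma keys_lift: "keys (lift pair ord ks f) \<subseteq> (\<lambda>m. pair_mon (ord m) ks) ` keys f"
  unfolding lift_eq by (rule keys_sum_single_subset)

lemma wdeg_pair_mon:
  assumes "mon_of_list js = m" "length js = length ks"
  shows "wdeg wz (pair_mon js ks) = wdeg w m + (\<Sum>i<length ks. w' (ks ! i))"
proof -
  have "wdeg wz (pair_mon js ks) = (\<Sum>i<length ks. w (js ! i) + w' (ks ! i))"
    unfolding pair_mon_def by (simp add: additive_sum[of "wdeg wz", OF wdeg_add wdeg_zero] wz_pair)
  moreover have "(\<Sum>i<length ks. w (js ! i)) = wdeg w m"
    using additive_mon_of_list[of "wdeg w", OF wdeg_add wdeg_zero, of js] assms by simp
  ultimately show ?thesis by (simp add: sum.distrib)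
qed

lemma mon_phi_pair_mon:
  assumes "mon_of_list js = m" "length js = length ks"
  shows "mon_phi (pair_mon js ks) = ren_mon var_own m + cofactor ks"
proof -
  have "mon_phi (pair_mon js ks) = (\<Sum>i<length ks. single (var_own (js ! i)) 1) + cofactor ks"
    unfolding pair_mon_def cofactor_def
    by (simp add: additive_sum[of mon_phi, OF mon_phi_add mon_phi_zero] mon_phi_pair sum.distrib)
  also have "(\<Sum>i<length ks. single (var_own (js ! i)) (1::nat)) = ren_mon var_own m"
    using additive_mon_of_list[of "ren_mon var_own", OF ren_mon_add ren_mon_zero, of js] assms by simp
  finally show ?thesis .
qed

context
  fixes f :: "(nat, 'k::comm_ring_1) mpoly" and L c Q' ord ks
  assumes hom: "\<exists>d. \<forall>m\<in>keys f. mdeg m = d"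
    and init: "init w f = single L c" "c \<noteq> 0"
    and vo: "valid_order Q' w f ord"
    and ks: "length ks = length (ord L)" "\<forall>i<length ks. (ord L ! i, ks ! i) \<in> Q'"
begin

lemmas compatible = valid_order_compatible[OF hom init vo ks]

lemma init_lift: "init wz (lift pair ord ks f) = single (pair_mon (ord L) ks) c"
proof -
  note L = lead_mon_eq[OF init]
  have "L \<in> keys f" using L(2) init(2) by (simp add: in_keys_iff)
  define S where "S = (\<Sum>i<length ks. w' (ks ! i))"
  have wdeg_lift: "wdeg wz (pair_mon (ord m) ks) = wdeg w m + S" if "m \<in> keys f" for m
    unfolding S_def using wdeg_pair_mon compatible(1,2)[OF that] by blast
  have lower: "wdeg wz (pair_mon (ord m) ks) < wdeg wz (pair_mon (ord L) ks)"
    if "m \<in> keys f" "m \<noteq> L" for m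
    using wdeg_lift[OF that(1)] wdeg_lift[OF \<open>L \<in> keys f\<close>] L(3)[OF that] by simp
  have "{m\<in>keys f. pair_mon (ord m) ks = pair_mon (ord L) ks} = {L}"
    using lower \<open>L \<in> keys f\<close> by fastforce
  then have lookup_L: "lookup (lift pair ord ks f) (pair_mon (ord L) ks) = c"
    unfolding lift_eq lookup_sum_single_when[OF finite_keys] using L(2) by simp
  show ?thesis
  proof (subst init_eq_single)
    show "lookup (lift pair ord ks f) (pair_mon (ord L) ks) \<noteq> 0" using lookup_L init(2) by simp
    fix \<nu> assume "\<nu> \<in> keys (lift pair ord ks f)" "\<nu> \<noteq> pair_mon (ord L) ks"
    then show "wdeg wz \<nu> < wdeg wz (pair_mon (ord L) ks)" using keys_lift lower by blast
  qed (simp add: lookup_L)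
qed

lemma phi_lift: "phi (lift pair ord ks f) = ren_poly var_own f * single (cofactor ks) 1"
proof -
  have "phi (lift pair ord ks f) = (\<Sum>m\<in>keys f. single (mon_phi (pair_mon (ord m) ks)) (lookup f m))"
    unfolding lift_eq by (simp add: phi_sum)
  also have "\<dots> = (\<Sum>m\<in>keys f. single (ren_mon var_own m + cofactor ks) (lookup f m))"
    using compatible mon_phi_pair_mon by (intro sum.cong) auto
  also have "\<dots> = ren_poly var_own f * single (cofactor ks) 1"
    by (simp add: ren_poly_def sum_distrib_right mult_single)
  finally show ?thesis .
qed

lemma lift_polys_in:
  assumes "\<And>u v. (u, v) \<in> Q' \<Longrightarrow> pair u v \<in> Q"
  shows "lift pair ord ks f \<in> polys_in Q"
proof (rule polys_inI)
  fix m assume "m \<in> keys (lift pair ord ks f)"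
  then obtain m0 where "m0 \<in> keys f" "m = pair_mon (ord m0) ks" using keys_lift by blast
  then show "keys m \<subseteq> Q" using keys_pair_mon compatible(3) assms by fastforce
qed

end

lemma divisible_own_part:
  "ren_mon own n = mon_of_list js + e \<Longrightarrow>
     \<exists>ks e'. length ks = length js \<and> (\<forall>i<length js. pair (js ! i) (ks ! i) \<in> keys n)
       \<and> n = pair_mon js ks + e'"
proof (induction js arbitrary: n e)
  case (Cons u js)
  have "0 < lookup (ren_mon own n) u" using Cons.prems by (simp add: mon_of_list_Cons lookup_add)
  then obtain p where p: "p \<in> keys n" "own p = u"
    unfolding lookup_ren_mon by (metis (mono_tags, lifting) mem_Collect_eq not_less0 sum.neutral)
  have "lookup (single p 1) v \<le> lookup n v" for v
    using p(1) by (cases "v = p") (simp_all add: lookup_single in_keys_iff Suc_le_eq)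
  note n = mon_le_decomp[OF this]
  have "ren_mon own n = single u 1 + ren_mon own (n - single p 1)"
    using p(2) by (subst n(1)) (simp add: ren_mon_add)
  then have "ren_mon own (n - single p 1) = mon_of_list js + e"
    using Cons.prems by (simp add: mon_of_list_Cons add.assoc)
  then obtain ks e' where ih: "length ks = length js"
      "\<forall>i<length js. pair (js ! i) (ks ! i) \<in> keys (n - single p 1)"
      "n - single p 1 = pair_mon js ks + e'"
    using Cons.IH by blast
  have p_eq: "pair u (other p) = p" using pair_own_other[of p] p(2) by simp
  show ?case
  proof (intro exI conjI allI impI)
    show "length (other p # ks) = length (u # js)" using ih(1) by simp
    show "pair ((u # js) ! i) ((other p # ks) ! i) \<in> keys n" if "i < length (u # js)" for i
      using that p_eq p(1) ih(2) n(2) by (cases i) auto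
    show "n = pair_mon (u # js) (other p # ks) + e'"
      using n(1) ih(3) p_eq by (simp add: pair_mon_Cons add.assoc)
  qed
qed (simp add: pair_mon_def)

text \<open>The monomial n is divisible by the leading monomial of a lift of f: pair the factors
  of the leading monomial of f with variables of n.\<close>

lemma single_in_init_lifts_ideal:
  fixes f :: "(nat, 'k::field) mpoly" and P :: "(nat \<times> nat, 'k) mpoly set"
  assumes hom: "\<exists>d. \<forall>m\<in>keys f. mdeg m = d"
    and init: "init w f = single L c" "c \<noteq> 0"
    and vo: "valid_order Q' w f ord"
    and Q_pair: "\<And>u v. pair u v \<in> Q \<Longrightarrow> (u, v) \<in> Q'"
    and n: "keys n \<subseteq> Q" and dvd: "mon_divides L (ren_mon own n)"
    and P: "Lifts pair Q' w ord f \<subseteq> P" "init wz ` P \<subseteq> polys_in Q"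
  shows "single n d \<in> ideal_gen (polys_in Q) (init wz ` P)"
proof -
  note L = lead_mon_eq[OF init]
  have "L \<in> keys f" using L(2) init(2) by (simp add: in_keys_iff)
  then have "mon_of_list (ord L) = L" using vo L(1) unfolding valid_order_def Let_def by simp
  then obtain e where "ren_mon own n = mon_of_list (ord L) + e"
    using dvd unfolding mon_divides_def by auto
  from divisible_own_part[OF this] obtain ks e' where ks: "length ks = length (ord L)"
      "\<forall>i<length (ord L). pair (ord L ! i) (ks ! i) \<in> keys n" "n = pair_mon (ord L) ks + e'"
    by blast
  have ks_Q': "\<forall>i<length ks. (ord L ! i, ks ! i) \<in> Q'" using ks(1,2) n Q_pair by auto
  then have "lift pair ord ks f \<in> P"
    using P(1) ks(1) L(1) unfolding Lifts_def by blast
  then have "single (pair_mon (ord L) ks) c \<in> ideal_gen (polys_in Q) (init wz ` P)"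
    using init_lift[OF hom init vo ks(1) ks_Q'] ideal_gen_subset by (metis image_subset_iff)
  moreover have "keys e' \<subseteq> Q" using n ks(3) by (simp add: keys_add_mon)
  moreover have "single e' (d / c) * single (pair_mon (ord L) ks) c = single n d"
    using init(2) ks(3) by (simp add: mult_single add.commute)
  ultimately show ?thesis
    using ideal_in_mult[OF ideal_in_ideal_gen[OF P(2)] polys_in_single] by metis
qed

lemma Lifts_subset_preimage:
  fixes f :: "(nat, 'k::comm_ring_1) mpoly"
  assumes hom: "\<exists>d. \<forall>m\<in>keys f. mdeg m = d"
    and init: "init w f = single L c" "c \<noteq> 0"
    and vo: "valid_order Q' w f ord"
    and Q: "\<And>u v. (u, v) \<in> Q' \<Longrightarrow> pair u v \<in> Q"
    and S: "is_ideal_in (polys_in W) S" "ren_poly var_own f \<in> S"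
    and W: "var_other ` snd ` Q' \<subseteq> W"
  shows "Lifts pair Q' w ord f \<subseteq> {h \<in> polys_in Q. phi h \<in> S}"
proof
  fix x assume "x \<in> Lifts pair Q' w ord f"
  then obtain ks where ks: "x = lift pair ord ks f" "length ks = length (ord L)"
      "\<forall>i<length ks. (ord L ! i, ks ! i) \<in> Q'"
    using lead_mon_eq(1)[OF init] unfolding Lifts_def by blast
  have "keys (cofactor ks) \<subseteq> W"
    unfolding cofactor_def using keys_sum_single_subset[of "\<lambda>i. var_other (ks ! i)"] ks(3) W
    by force
  then have "phi x \<in> S"
    unfolding ks(1) phi_lift[OF hom init vo ks(2,3)]
    using ideal_in_mult[OF S(1) polys_in_single S(2)] by (simp add: mult.commute)
  then show "x \<in> {h \<in> polys_in Q. phi h \<in> S}"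
    using lift_polys_in[OF hom init vo ks(2,3) Q] ks(1) by simp
qed

end

section \<open>The pseudo-Groebner basis of the gluing\<close>

lemma finite_Lifts:
  assumes "finite Q'"
  shows "finite (Lifts pair Q' w ord f)"
proof -
  let ?n = "length (ord (lead_mon w f))"
  have "Lifts pair Q' w ord f \<subseteq> (\<lambda>ks. lift pair ord ks f) ` {ks. set ks \<subseteq> snd ` Q' \<and> length ks = ?n}"
    unfolding Lifts_def by (force simp: in_set_conv_nth)
  moreover have "finite {ks. set ks \<subseteq> snd ` Q' \<and> length ks = ?n}"
    using assms by (intro finite_lists_length_eq) simp
  ultimately show ?thesis using finite_subset by blast
qed

lemma finite_H_Q:
  assumes "finite Q"
  shows "finite (H_Q Q :: (nat \<times> nat, 'k::comm_ring_1) mpoly set)"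
proof -
  let ?A = "{js. set js \<subseteq> fst ` Q \<and> length js \<le> card (fst ` Q)}"
  let ?B = "{ks. set ks \<subseteq> snd ` Q \<and> length ks \<le> card (snd ` Q)}"
  have "(js, ks) \<in> ?A \<times> ?B" if "induced_cycle Q js ks" for js ks
  proof -
    have "length ks = length js" "distinct js" "distinct ks"
      and edges: "\<forall>i<length js. (js ! i, ks ! i) \<in> Q"
      using that unfolding induced_cycle_def Let_def by auto
    then have "set js \<subseteq> fst ` Q" "set ks \<subseteq> snd ` Q"
      by (force simp: in_set_conv_nth)+
    moreover have "length js \<le> card (fst ` Q)" "length ks \<le> card (snd ` Q)"
      using calculation \<open>distinct js\<close> \<open>distinct ks\<close> assms
      by (metis distinct_card card_mono finite_imageI)+
    ultimately show ?thesis by simp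
  qed
  then have "H_Q Q \<subseteq> (\<lambda>(js, ks). (cycle_binomial js ks :: (nat \<times> nat, 'k) mpoly)) ` (?A \<times> ?B)"
    unfolding H_Q_def by fast
  moreover have "finite (?A \<times> ?B)"
    using finite_lists_length_le[of "fst ` Q"] finite_lists_length_le[of "snd ` Q"] assms by simp
  ultimately show ?thesis using finite_subset by blast
qed

lemma init_binom:
  assumes "wdeg w a = wdeg w b"
  shows "init w (binom a b :: ('v, 'k::comm_ring_1) mpoly) = binom a b"
proof (rule init_eq_self)
  fix m assume "m \<in> keys (binom a b :: ('v, 'k) mpoly)"
  then have "m = a \<or> m = b"
    using keys_diff[of "single a (1::'k)" "single b 1"] by (auto simp: binom_def split: if_splits)
  then show "wdeg w m = wdeg w a" using assms by auto
qed

locale quasi_independence_gluing =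
  homogeneous_gb_pair "{1..r}" I F w1 "{1..s}" J G w2
  for r s and I F :: "(nat, 'k::field) mpoly set" and w1 and J G :: "(nat, 'k) mpoly set" and w2 +
  fixes Q :: "(nat \<times> nat) set" and oF oG :: "(nat, 'k) mpoly \<Rightarrow> (nat \<Rightarrow>\<^sub>0 nat) \<Rightarrow> nat list"
  assumes Q_subset: "Q \<subseteq> {1..r} \<times> {1..s}"
    and valid_oF: "\<forall>f\<in>F. valid_order Q w1 f (oF f)"
    and valid_oG: "\<forall>g\<in>G. valid_order (converse Q) w2 g (oG g)"
begin

sublocale LX: lift_data Pair fst snd Inl Inr w1 w2 "\<lambda>p. w1 (fst p) + w2 (snd p)"
  by unfold_locales (simp_all add: mon_phi_single)

sublocale LY: lift_data "\<lambda>a b. (b, a)" snd fst Inr Inl w2 w1 "\<lambda>p. w1 (fst p) + w2 (snd p)"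
  by unfold_locales (simp_all add: mon_phi_single add.commute)

abbreviation wz :: "nat \<times> nat \<Rightarrow> real" where
  "wz \<equiv> \<lambda>p. w1 (fst p) + w2 (snd p)"

definition gens :: "(nat \<times> nat, 'k) mpoly set" where
  "gens = (\<Union>f\<in>F. Lifts Pair Q w1 (oF f) f) \<union> (\<Union>g\<in>G. Lifts (\<lambda>a b. (b, a)) (converse Q) w2 (oG g) g)
     \<union> H_Q Q"

lemma glue_eq: "glue r s Q I J = {h \<in> polys_in Q. phi h \<in> sum_ideal}"
  unfolding glue_def sum_ideal_def vars_xy_def ..

lemma finite_gens: "finite gens"
proof -
  have "finite Q" using Q_subset finite_subset by blast
  then show ?thesis
    unfolding gens_def using X.finite_F Y.finite_F by (auto intro!: finite_Lifts finite_H_Q)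
qed

lemma gens_subset_glue: "gens \<subseteq> glue r s Q I J"
proof -
  have "Lifts Pair Q w1 (oF f) f \<subseteq> glue r s Q I J" if f: "f \<in> F" for f
  proof -
    obtain L c where init: "c \<noteq> 0" "init w1 f = single L c" using X.init_monomial f by blast
    have "ren_poly Inl f \<in> ren_poly Inl ` I \<union> ren_poly Inr ` J" using f X.F_subset by blast
    then have "ren_poly Inl f \<in> sum_ideal"
      unfolding sum_ideal_def by (rule subsetD[OF ideal_gen_subset])
    moreover have "Inr ` snd ` Q \<subseteq> vars_xy" using Q_subset unfolding vars_xy_def by auto
    ultimately show ?thesis
      unfolding glue_eq using X.homogeneous valid_oF f
      by (intro LX.Lifts_subset_preimage[OF _ init(2,1) _ _ is_ideal_in_sum_ideal]) auto
  qed
  moreover have "Lifts (\<lambda>a b. (b, a)) (converse Q) w2 (oG g) g \<subseteq> glue r s Q I J" if g: "g \<in> G" for g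
  proof -
    obtain L c where init: "c \<noteq> 0" "init w2 g = single L c" using Y.init_monomial g by blast
    have "ren_poly Inr g \<in> ren_poly Inl ` I \<union> ren_poly Inr ` J" using g Y.F_subset by blast
    then have "ren_poly Inr g \<in> sum_ideal"
      unfolding sum_ideal_def by (rule subsetD[OF ideal_gen_subset])
    moreover have "Inl ` snd ` converse Q \<subseteq> vars_xy" using Q_subset unfolding vars_xy_def by auto
    ultimately show ?thesis
      unfolding glue_eq using Y.homogeneous valid_oG g
      by (intro LY.Lifts_subset_preimage[OF _ init(2,1) _ _ is_ideal_in_sum_ideal]) auto
  qed
  moreover have "H_Q Q \<subseteq> glue r s Q I J"
  proof
    fix x :: "(nat \<times> nat, 'k) mpoly" assume x: "x \<in> H_Q Q"
    then obtain js ks where "induced_cycle Q js ks" "x = cycle_binomial js ks"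
      unfolding H_Q_def by blast
    then have "phi x = 0" by (metis mon_phi_cycle_binomial phi_binom)
    then show "x \<in> glue r s Q I J"
      using x H_Q_subset ideal_in_zero[OF is_ideal_in_sum_ideal] unfolding glue_eq by auto
  qed
  ultimately show ?thesis unfolding gens_def by blast
qed

abbreviation init_ideal :: "(nat \<times> nat, 'k) mpoly set" where
  "init_ideal \<equiv> ideal_gen (polys_in Q) (init wz ` gens)"

lemma init_gens_subset: "init wz ` gens \<subseteq> polys_in Q"
  using gens_subset_glue init_polys_in unfolding glue_eq by blast

lemma is_ideal_in_init_ideal: "is_ideal_in (polys_in Q) init_ideal"
  by (rule ideal_in_ideal_gen[OF init_gens_subset])

lemma cycle_ideal_subset_init_ideal: "cycle_ideal Q \<subseteq> init_ideal"
proof -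
  have "x \<in> init wz ` gens" if x: "x \<in> H_Q Q" for x
  proof -
    obtain js ks where "induced_cycle Q js ks" "x = cycle_binomial js ks"
      using x unfolding H_Q_def by blast
    then obtain a b where ab: "x = binom a b" "mon_phi a = mon_phi b"
      using mon_phi_cycle_binomial by metis
    then have "wdeg wz a = wdeg wz b"
      using wdeg_mon_phi[of w1 w2 a] wdeg_mon_phi[of w1 w2 b] by simp
    then have "init wz x = x" using ab(1) by (simp add: init_binom)
    moreover have "x \<in> gens" using x unfolding gens_def by blast
    ultimately show ?thesis by force
  qed
  then have "H_Q Q \<subseteq> init wz ` gens" by blast
  then show ?thesis
    unfolding cycle_ideal_def by (rule ideal_gen_mono[OF _ init_gens_subset])
qed

lemma nonstd_single_in_init_ideal:
  assumes n: "keys n \<subseteq> Q" and nonstd: "ren_mon fst n \<notin> X.std \<or> ren_mon snd n \<notin> Y.std"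
  shows "single n d \<in> init_ideal"
  using nonstd
proof
  assume "ren_mon fst n \<notin> X.std"
  then obtain f where f: "f \<in> F" "mon_divides (lead_mon w1 f) (ren_mon fst n)"
    unfolding X.std_def by blast
  obtain L c where init: "c \<noteq> 0" "init w1 f = single L c" using X.init_monomial f(1) by blast
  have hom: "\<exists>d. \<forall>m\<in>keys f. mdeg m = d" and vo: "valid_order Q w1 f (oF f)"
    using X.homogeneous valid_oF f(1) by blast+
  show ?thesis
  proof (rule LX.single_in_init_lifts_ideal[OF hom init(2,1) vo _ n _ _ init_gens_subset])
    show "mon_divides L (ren_mon fst n)" using f(2) lead_mon_eq(1)[OF init(2,1)] by simp
    show "Lifts Pair Q w1 (oF f) f \<subseteq> gens" using f(1) unfolding gens_def by blast
  qed
next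
  assume "ren_mon snd n \<notin> Y.std"
  then obtain g where g: "g \<in> G" "mon_divides (lead_mon w2 g) (ren_mon snd n)"
    unfolding Y.std_def by blast
  obtain L c where init: "c \<noteq> 0" "init w2 g = single L c" using Y.init_monomial g(1) by blast
  have hom: "\<exists>d. \<forall>m\<in>keys g. mdeg m = d" and vo: "valid_order (converse Q) w2 g (oG g)"
    using Y.homogeneous valid_oG g(1) by blast+
  show ?thesis
  proof (rule LY.single_in_init_lifts_ideal[OF hom init(2,1) vo _ n _ _ init_gens_subset])
    show "mon_divides L (ren_mon snd n)" using g(2) lead_mon_eq(1)[OF init(2,1)] by simp
    show "Lifts (\<lambda>a b. (b, a)) (converse Q) w2 (oG g) g \<subseteq> gens" using g(1) unfolding gens_def by blast
  qed simp
qed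

definition std_xy :: "(nat \<times> nat \<Rightarrow>\<^sub>0 nat) \<Rightarrow> bool" where
  "std_xy n \<longleftrightarrow> ren_mon fst n \<in> X.std \<and> ren_mon snd n \<in> Y.std"

lemma lookup_phi_superset:
  assumes "finite A" "keys p \<subseteq> A"
  shows "lookup (phi p) \<mu> = (\<Sum>m\<in>{m\<in>A. mon_phi m = \<mu>}. lookup p m)"
  unfolding lookup_phi using assms
  by (intro sum.mono_neutral_left) (auto simp: in_keys_iff)

text \<open>The part of an initial form supported on monomials with standard images on both
  sides lies in the kernel of phi_Q: otherwise phi_Q of the initial form would contain a
  monomial of maximal weight that is standard modulo I + J.\<close>

lemma phi_std_part_eq_0:
  assumes h: "h \<in> glue r s Q I J"
  shows "phi (\<Sum>n\<in>keys (init wz h) \<inter> Collect std_xy. single n (lookup (init wz h) n)) = 0"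
    (is "phi ?hS = 0")
proof (rule poly_mapping_eqI)
  fix \<mu>
  let ?w = "wdeg (weight_xy w1 w2)" and ?C = "max_wdeg wz h"
  let ?P = "x_part \<mu> \<in> X.std \<and> y_part \<mu> \<in> Y.std \<and> ?w \<mu> = ?C"
  have "lookup ?hS n = (if n \<in> keys (init wz h) \<and> std_xy n then lookup (init wz h) n else 0)" for n
    by (simp add: lookup_sum lookup_single when_def sum.delta)
  then have lookup_hS: "lookup ?hS n = (if std_xy n \<and> wdeg wz n = ?C then lookup h n else 0)" for n
    by (cases "n \<in> keys (init wz h)")
       (auto simp: lookup_init keys_init not_in_keys_iff_lookup_eq_zero)
  have "keys ?hS \<subseteq> keys h" using lookup_hS by (auto simp: in_keys_iff split: if_splits)
  then have "lookup (phi ?hS) \<mu> = (\<Sum>m\<in>{m\<in>keys h. mon_phi m = \<mu>}. lookup ?hS m)"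
    by (rule lookup_phi_superset[OF finite_keys])
  also have "\<dots> = (\<Sum>m\<in>{m\<in>keys h. mon_phi m = \<mu>}. if ?P then lookup h m else 0)"
    by (intro sum.cong refl)
       (auto simp: lookup_hS std_xy_def x_part_mon_phi[symmetric] y_part_mon_phi[symmetric] wdeg_mon_phi)
  also have "\<dots> = (if ?P then lookup (phi h) \<mu> else 0)"
  proof (cases ?P)
    case True
    then show ?thesis by (simp add: lookup_phi)
  next
    case False
    then show ?thesis by (simp only: if_not_P[OF False] if_False sum.neutral_const)
  qed
  also have "\<dots> = 0"
  proof (rule ccontr)
    assume "(if ?P then lookup (phi h) \<mu> else 0) \<noteq> 0"
    then have P: ?P and \<mu>: "\<mu> \<in> keys (phi h)" by (auto simp: in_keys_iff split: if_splits)
    have "?w \<nu> \<le> ?w \<mu>" if \<nu>: "\<nu> \<in> keys (phi h)" for \<nu>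
    proof -
      obtain m where "m \<in> keys h" "\<nu> = mon_phi m" using keys_phi \<nu> by blast
      then show ?thesis using wdeg_le_max_wdeg[of m h wz] wdeg_mon_phi[of w1 w2 m] P by simp
    qed
    moreover have "phi h \<in> sum_ideal" using h unfolding glue_eq by blast
    ultimately have "x_part \<mu> \<notin> X.std \<or> y_part \<mu> \<notin> Y.std"
      using top_key_nonstandard \<mu> by blast
    then show False using P by blast
  qed
  finally show "lookup (phi ?hS) \<mu> = lookup 0 \<mu>" by simp
qed

lemma init_glue_in_init_ideal:
  assumes h: "h \<in> glue r s Q I J"
  shows "init wz h \<in> init_ideal"
proof -
  let ?ih = "init wz h" and ?S = "Collect std_xy"
  let ?hS = "\<Sum>n\<in>keys ?ih \<inter> ?S. single n (lookup ?ih n)"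
  let ?hN = "\<Sum>n\<in>keys ?ih - ?S. single n (lookup ?ih n)"
  have split: "?ih = ?hS + ?hN"
    by (subst (1) sum_single_lookup[of ?ih, symmetric]) (rule sum.Int_Diff[OF finite_keys])
  have keys_Q: "keys n \<subseteq> Q" if "n \<in> keys ?ih" for n
    using that h keys_init_subset polys_inD unfolding glue_eq by blast
  have "single n (lookup ?ih n) \<in> init_ideal" if "n \<in> keys ?ih - ?S" for n
    using that keys_Q nonstd_single_in_init_ideal unfolding std_xy_def by blast
  then have N: "?hN \<in> init_ideal" by (rule ideal_in_sum[OF is_ideal_in_init_ideal])
  have "?hS \<in> polys_in Q"
    using keys_Q by (intro polys_in_sum polys_in_single) blast
  then have S: "?hS \<in> init_ideal"
    using phi_eq_0_imp_in_cycle_ideal phi_std_part_eq_0[OF h] cycle_ideal_subset_init_ideal by blast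
  show ?thesis using ideal_in_add[OF is_ideal_in_init_ideal S N] split by simp
qed

theorem pseudo_GB_gens: "pseudo_GB (polys_in Q) wz gens (glue r s Q I J)"
  unfolding pseudo_GB_def
proof (intro conjI finite_gens gens_subset_glue equalityI)
  have "init wz ` glue r s Q I J \<subseteq> polys_in Q"
    using init_polys_in unfolding glue_eq by blast
  then show "init_ideal \<subseteq> ideal_gen (polys_in Q) (init wz ` glue r s Q I J)"
    using gens_subset_glue by (intro ideal_gen_mono) auto
  show "ideal_gen (polys_in Q) (init wz ` glue r s Q I J) \<subseteq> init_ideal"
    using init_glue_in_init_ideal by (intro ideal_gen_least[OF is_ideal_in_init_ideal]) blast
qed

end

theorem theorem3p7:
  fixes r s :: nat and Q :: "(nat \<times> nat) set"
    and I J F G :: "(nat, 'k::field) mpoly set"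
    and \<omega>1 \<omega>2 :: "nat \<Rightarrow> real"
    and oF oG :: "(nat, 'k) mpoly \<Rightarrow> (nat \<Rightarrow>\<^sub>0 nat) \<Rightarrow> nat list"
  assumes "0 < r" and "0 < s" and "Q \<subseteq> {1..r} \<times> {1..s}"
    and "is_ideal_in (polys_in {1..r}) I" and "homog_ideal I"
    and "is_ideal_in (polys_in {1..s}) J" and "homog_ideal J"
    and "groebner_basis (polys_in {1..r}) \<omega>1 F I"
    and "groebner_basis (polys_in {1..s}) \<omega>2 G J"
    and "\<forall>f\<in>F. weakly_Q_hom Q \<omega>1 f"
    and "\<forall>g\<in>G. weakly_Q_hom (converse Q) \<omega>2 g"
    and "\<forall>f\<in>F. valid_order Q \<omega>1 f (oF f)"
    and "\<forall>g\<in>G. valid_order (converse Q) \<omega>2 g (oG g)"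
  shows "pseudo_GB (polys_in Q) (\<lambda>p. \<omega>1 (fst p) + \<omega>2 (snd p))
           ((\<Union>f\<in>F. Lifts Pair Q \<omega>1 (oF f) f)
            \<union> (\<Union>g\<in>G. Lifts (\<lambda>a b. (b, a)) (converse Q) \<omega>2 (oG g) g)
            \<union> H_Q Q)
           (glue r s Q I J)"
proof -
  have "homogeneous_gb {1..r} I F \<omega>1" "homogeneous_gb {1..s} J G \<omega>2"
    using assms(4,6,8-11) unfolding homogeneous_gb_def weakly_Q_hom_def by auto
  then interpret quasi_independence_gluing r s I F \<omega>1 J G \<omega>2 Q oF oG
    using assms(3,12,13)
    by (intro quasi_independence_gluing.intro homogeneous_gb_pair.intro
        quasi_independence_gluing_axioms.intro)
  show ?thesis using pseudo_GB_gens unfolding gens_def .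
qed

end
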